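(* Let $f_1,f_2$ be strongly hyperbolic functions. Let $C\in\mathcal{C}^-(f_1,f_2)$, $p\in C$, $q\notin C$, with $q$ not parallel to $p$. Then there is at most one $D\in\mathcal{C}^-(f_1,f_2)$ with $p,q\in D$ and $C\cap D=\{p\}$.
   Context: Identify $\mathbb{S}^1$ with $\mathbb{R}\cup\{\infty\}$, $\mathcal{P}=\mathbb{S}^1\times\mathbb{S}^1$, $\mathbb{R}^+=(0,\infty)$. Two points of $\mathcal{P}$ are parallel if they have the same first coordinate or the same second coordinate. A function $f:\mathbb{R}^+\to\mathbb{R}^+$ is strongly hyperbolic if: (1) $\lim_{x\to0+}f(x)=+\infty$, $\lim_{x\to+\infty}f(x)=0$; (2) $f$ strictly convex; (3) $\lim_{x\to+\infty}f(x+b)/f(x)=1$ for each $b\in\mathbb{R}$; (4) $f$ differentiable; (5) $\ln|f'|$ strictly convex. For $a>0$, $b,c\in\mathbb{R}$: $f_{a,b,c}(x)=af_1(x+b)+c$ for $x>-b$, $f_{a,b,c}(x)=-af_2(-x-b)+c$ for $x<-b$; $\overline{f_{a,b,c}}=\{(x,f_{a,b,c}(x)):x\ne-b\}\cup\{(-b,\infty),(\infty,c)\}$; $\overline{l_{s,t}}=\{(x,sx+t):x\in\mathbb{R}\}\cup\{(\infty,\infty)\}$; $\mathcal{C}^-(f_1,f_2)=\{\overline{f_{a,b,c}}:a>0,b,c\in\mathbb{R}\}\cup\{\overline{l_{s,t}}:s<0,t\in\mathbb{R}\}$. *)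

theory Defs
  imports "HOL-Analysis.Analysis"
begin

text \<open>The circle S^1 = R \<union> {\<infinity>}.\<close>
datatype ext = Fin real | Infty

type_synonym point = "ext \<times> ext"

definition parallel :: "point \<Rightarrow> point \<Rightarrow> bool" where
  "parallel p q \<longleftrightarrow> fst p = fst q \<or> snd p = snd q"

definition strictly_convex_on :: "real set \<Rightarrow> (real \<Rightarrow> real) \<Rightarrow> bool" where
  "strictly_convex_on S f \<longleftrightarrow>
     (\<forall>x\<in>S. \<forall>y\<in>S. \<forall>u::real. x \<noteq> y \<and> 0 < u \<and> u < 1 \<longrightarrow>
        f ((1 - u) * x + u * y) < (1 - u) * f x + u * f y)"

text \<open>Strongly hyperbolic functions R+ \<rightarrow> R+ (values outside (0,\<infinity>) are irrelevant).\<close>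
definition strongly_hyperbolic :: "(real \<Rightarrow> real) \<Rightarrow> bool" where
  "strongly_hyperbolic f \<longleftrightarrow>
     (\<forall>x>0. f x > 0) \<and>
     filterlim f at_top (at_right 0) \<and>
     (f \<longlongrightarrow> 0) at_top \<and>
     strictly_convex_on {0<..} f \<and>
     (\<forall>b::real. ((\<lambda>x. f (x + b) / f x) \<longlongrightarrow> 1) at_top) \<and>
     (\<forall>x>0. f differentiable (at x)) \<and>
     strictly_convex_on {0<..} (\<lambda>x. ln \<bar>deriv f x\<bar>)"

definition fabc :: "(real \<Rightarrow> real) \<Rightarrow> (real \<Rightarrow> real) \<Rightarrow> real \<Rightarrow> real \<Rightarrow> real \<Rightarrow> real \<Rightarrow> real" where
  "fabc f1 f2 a b c x = (if x > - b then a * f1 (x + b) + c else - a * f2 (- x - b) + c)"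

definition curve_fabc :: "(real \<Rightarrow> real) \<Rightarrow> (real \<Rightarrow> real) \<Rightarrow> real \<Rightarrow> real \<Rightarrow> real \<Rightarrow> point set" where
  "curve_fabc f1 f2 a b c =
     {(Fin x, Fin (fabc f1 f2 a b c x)) | x. x \<noteq> - b} \<union> {(Fin (- b), Infty), (Infty, Fin c)}"

definition curve_line :: "real \<Rightarrow> real \<Rightarrow> point set" where
  "curve_line s t = {(Fin x, Fin (s * x + t)) | x. True} \<union> {(Infty, Infty)}"

definition Cminus :: "(real \<Rightarrow> real) \<Rightarrow> (real \<Rightarrow> real) \<Rightarrow> point set set" where
  "Cminus f1 f2 =
     {curve_fabc f1 f2 a b c | a b c. a > 0} \<union> {curve_line s t | s t. s < 0}"

end

theory Submission
  imports Defs
begin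

text \<open>
  Every curve of \<open>C\<^sup>-(f\<^sub>1, f\<^sub>2)\<close> other than a line is the graph of
  \<open>x \<mapsto> a F(x + b) + c\<close> for the single profile \<open>F\<close> that equals \<open>f\<^sub>1\<close> on the positive and
  \<open>t \<mapsto> -f\<^sub>2(-t)\<close> on the negative reals. If two curves meet only at a finite point \<open>p\<close>,
  the difference of their defining functions has the same sign near both ends of the interval
  (cut out by poles) that contains the abscissa of \<open>p\<close>; a transversal zero at \<open>p\<close> would
  therefore force a second one, so the curves have the same slope at \<open>p\<close>.
  Among the curves through \<open>p\<close> with that slope, the height of the curve over another
  abscissa is governed by \<open>(F(b + X) - F(b)) / F'(b)\<close>, which is strictly increasing in \<open>b\<close>
  on each of three intervals with pairwise disjoint ranges; this is where the strict
  log-convexity of \<open>|f\<^sub>i'|\<close> enters, and it shows that at most one of these curves passes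
  through \<open>q\<close>. At the points at infinity, touching forces equal slopes of lines or equal
  scale factors \<open>a\<close>, and passing through \<open>q\<close> fixes the remaining parameter.
\<close>

lemma eventually_at_right_obtain:
  fixes l r :: real
  assumes "eventually P (at_right l)" "l < r"
  obtains x where "l < x" "x < r" "P x"
proof -
  have "eventually (\<lambda>x. x \<in> {l<..<r} \<and> P x) (at_right l)"
    using eventually_conj[OF eventually_at_right_real[OF assms(2)] assms(1)] .
  then show thesis
    using eventually_happens'[OF trivial_limit_at_right_real] that by auto
qed

lemma eventually_at_left_obtain:
  fixes l r :: real
  assumes "eventually P (at_left r)" "l < r"
  obtains x where "l < x" "x < r" "P x"
proof -
  have "eventually (\<lambda>x. x \<in> {l<..<r} \<and> P x) (at_left r)"
    using eventually_conj[OF eventually_at_left_real[OF assms(2)] assms(1)] .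
  then show thesis
    using eventually_happens'[OF trivial_limit_at_left_real] that by auto
qed

lemma eventually_at_top_obtain:
  fixes l :: real
  assumes "eventually P at_top"
  obtains x where "l < x" "P x"
  using eventually_happens'[OF trivial_limit_at_top_linorder
      eventually_conj[OF eventually_gt_at_top[of l] assms]] by auto

lemma eventually_at_bot_obtain:
  fixes r :: real
  assumes "eventually P at_bot"
  obtains x where "x < r" "P x"
  using eventually_happens'[OF trivial_limit_at_bot_linorder
      eventually_conj[OF eventually_gt_at_bot[of r] assms]] by auto

lemma tendsto_imp_eventually_less:
  fixes f g :: "'a \<Rightarrow> real"
  assumes "(f \<longlongrightarrow> l) F" "(g \<longlongrightarrow> m) F" "l < m"
  shows "eventually (\<lambda>x. f x < g x) F"
proof -
  have "eventually (\<lambda>x. f x < (l + m) / 2) F" "eventually (\<lambda>x. (l + m) / 2 < g x) F"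
    using order_tendstoD(2)[OF assms(1), of "(l + m) / 2"] order_tendstoD(1)[OF assms(2), of "(l + m) / 2"]
      assms(3) by simp_all
  then show ?thesis
    by eventually_elim simp
qed

lemma tendsto_filterlim_at_top_imp_eventually_less:
  fixes f g :: "'a \<Rightarrow> real"
  assumes "(f \<longlongrightarrow> l) F" "filterlim g at_top F"
  shows "eventually (\<lambda>x. f x < g x) F"
proof -
  have "eventually (\<lambda>x. f x < l + 1) F" "eventually (\<lambda>x. l + 1 < g x) F"
    using order_tendstoD(2)[OF assms(1)] assms(2) by (auto simp: filterlim_at_top_dense)
  then show ?thesis
    by eventually_elim simp
qed

lemma filterlim_at_bot_tendsto_imp_eventually_less:
  fixes f g :: "'a \<Rightarrow> real"
  assumes "filterlim f at_bot F" "(g \<longlongrightarrow> m) F"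
  shows "eventually (\<lambda>x. f x < g x) F"
proof -
  have "eventually (\<lambda>x. f x < m - 1) F" "eventually (\<lambda>x. m - 1 < g x) F"
    using order_tendstoD(1)[OF assms(2)] assms(1) by (auto simp: filterlim_at_bot_dense)
  then show ?thesis
    by eventually_elim simp
qed

lemma filterlim_neg_slope_at_top:
  fixes s t :: real
  assumes "s < 0"
  shows "filterlim (\<lambda>x. s * x + t) at_bot at_top"
proof -
  have "filterlim (\<lambda>x. s * x) at_bot at_top"
    using filterlim_tendsto_neg_mult_at_bot[OF tendsto_const assms filterlim_ident] .
  then show ?thesis
    using filterlim_tendsto_add_at_bot_iff[OF tendsto_const, of t "\<lambda>x. s * x" at_top]
    by (simp add: add.commute)
qed

lemma filterlim_neg_slope_at_bot:
  fixes s t :: real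
  assumes "s < 0"
  shows "filterlim (\<lambda>x. s * x + t) at_top at_bot"
  using filterlim_neg_slope_at_top[OF assms, of "- t"]
  by (simp add: filterlim_at_bot_mirror filterlim_uminus_at_top)

lemma transversal_zero_positive_ends:
  fixes h :: "real \<Rightarrow> real"
  assumes "a0 < u" "u < b0" and "\<And>x. a0 \<le> x \<Longrightarrow> x \<le> b0 \<Longrightarrow> isCont h x"
    and "h u = 0" and der: "(h has_real_derivative d) (at u)" and "d \<noteq> 0"
    and "0 < h a0" "0 < h b0"
  shows "\<exists>z. a0 < z \<and> z < b0 \<and> z \<noteq> u \<and> h z = 0"
proof (cases "0 < d")
  case True
  obtain \<delta> where \<delta>: "0 < \<delta>" "\<And>k. 0 < k \<Longrightarrow> k < \<delta> \<Longrightarrow> h (u - k) < h u"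
    using DERIV_pos_inc_left[OF der True] by blast
  obtain k where k: "0 < k" "k < \<delta>" "k < u - a0"
    using field_lbound_gt_zero[of \<delta> "u - a0"] \<delta>(1) assms(1) by auto
  have "\<exists>z. a0 \<le> z \<and> z \<le> u - k \<and> h z = 0"
    using \<delta>(2)[OF k(1,2)] assms k by (intro IVT2) auto
  then obtain z where z: "a0 \<le> z" "z \<le> u - k" "h z = 0"
    by blast
  moreover have "z \<noteq> a0"
    using z assms(7) by auto
  ultimately show ?thesis
    using k assms(2) by (intro exI[of _ z]) auto
next
  case False
  obtain \<delta> where \<delta>: "0 < \<delta>" "\<And>k. 0 < k \<Longrightarrow> k < \<delta> \<Longrightarrow> h (u + k) < h u"
    using DERIV_neg_dec_right[OF der] assms(6) False by force
  obtain k where k: "0 < k" "k < \<delta>" "k < b0 - u"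
    using field_lbound_gt_zero[of \<delta> "b0 - u"] \<delta>(1) assms(2) by auto
  have "\<exists>z. u + k \<le> z \<and> z \<le> b0 \<and> h z = 0"
    using \<delta>(2)[OF k(1,2)] assms k by (intro IVT) auto
  then obtain z where z: "u + k \<le> z" "z \<le> b0" "h z = 0"
    by blast
  moreover have "z \<noteq> b0"
    using z assms(8) by auto
  ultimately show ?thesis
    using k assms(1) by (intro exI[of _ z]) auto
qed

lemma transversal_zero_not_unique:
  fixes h :: "real \<Rightarrow> real"
  assumes "a0 < u" "u < b0" and "\<And>x. a0 \<le> x \<Longrightarrow> x \<le> b0 \<Longrightarrow> isCont h x"
    and "h u = 0" "(h has_real_derivative d) (at u)" "d \<noteq> 0"
    and "0 < h a0 * h b0"
  obtains z where "a0 < z" "z < b0" "z \<noteq> u" "h z = 0"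
proof -
  consider "0 < h a0" "0 < h b0" | "h a0 < 0" "h b0 < 0"
    using assms(7) by (auto simp: zero_less_mult_iff)
  then show thesis
  proof cases
    case 1
    then show thesis
      using transversal_zero_positive_ends[of a0 u b0 h d] assms that by blast
  next
    case 2
    have "\<exists>z. a0 < z \<and> z < b0 \<and> z \<noteq> u \<and> - h z = 0"
      using 2 assms by (intro transversal_zero_positive_ends[where d = "- d"]) (auto intro: DERIV_minus)
    then show thesis
      using that by auto
  qed
qed

lemma divide_less_divide_neg:
  fixes x y a b :: real
  shows "a < 0 \<Longrightarrow> b < 0 \<Longrightarrow> x * b < y * a \<Longrightarrow> x / a < y / b"
  by (simp add: divide_simps mult.commute)

lemma inj_on_Un3_strict_mono_on:
  fixes g :: "real \<Rightarrow> real"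
  assumes "strict_mono_on A g" "strict_mono_on B g" "strict_mono_on C g"
    and "g ` A \<inter> g ` B = {}" "g ` A \<inter> g ` C = {}" "g ` B \<inter> g ` C = {}"
  shows "inj_on g (A \<union> B \<union> C)"
  using assms strict_mono_on_imp_inj_on unfolding inj_on_Un by blast

section \<open>Strictly convex and strongly hyperbolic functions\<close>

lemma strictly_convex_on_imp_convex_on:
  fixes f :: "real \<Rightarrow> real"
  assumes "strictly_convex_on S f" "convex S"
  shows "convex_on S f"
proof (rule convex_onI)
  fix t x y :: real assume t: "0 < t" "t < 1" and "x \<in> S" "y \<in> S"
  show "f ((1 - t) *\<^sub>R x + t *\<^sub>R y) \<le> (1 - t) * f x + t * f y"
  proof (cases "x = y")
    case False
    then show ?thesis
      using assms(1) t \<open>x \<in> S\<close> \<open>y \<in> S\<close> unfolding strictly_convex_on_def by fastforce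
  qed (simp add: algebra_simps)
qed fact

lemma strictly_convex_on_slope_less:
  fixes f :: "real \<Rightarrow> real"
  assumes sc: "strictly_convex_on S f" and "a \<in> S" "c \<in> S" "a < b" "b < c"
  shows "(f b - f a) / (b - a) < (f c - f a) / (c - a)"
    and "(f c - f a) / (c - a) < (f c - f b) / (c - b)"
proof -
  define u where "u = (b - a) / (c - a)"
  have uc: "u * (c - a) = b - a"
    using assms by (simp add: u_def)
  have u: "0 < u" "u < 1"
    using assms by (auto simp: u_def field_simps)
  have b: "(1 - u) * a + u * c = b"
    using uc by (simp add: algebra_simps)
  have "f ((1 - u) * a + u * c) < (1 - u) * f a + u * f c"
    using sc assms u unfolding strictly_convex_on_def by force
  then have key: "f b < (1 - u) * f a + u * f c"
    by (simp only: b)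
  have "(f b - f a) * (c - a) < u * (f c - f a) * (c - a)"
    using key assms by (intro mult_strict_right_mono) (auto simp: algebra_simps)
  also have "\<dots> = (f c - f a) * (b - a)"
    by (simp only: uc[symmetric] mult_ac)
  finally show "(f b - f a) / (b - a) < (f c - f a) / (c - a)"
    using assms by (simp add: divide_simps mult.commute)
  have "c - b = (1 - u) * (c - a)"
    using uc by (simp add: algebra_simps)
  then have "(f c - f a) * (c - b) = (1 - u) * (f c - f a) * (c - a)"
    by (simp only: mult_ac)
  also have "\<dots> < (f c - f b) * (c - a)"
    using key assms by (intro mult_strict_right_mono) (auto simp: algebra_simps)
  finally show "(f c - f a) / (c - a) < (f c - f b) / (c - b)"
    using assms by (simp add: divide_simps mult.commute)
qed

lemma strictly_convex_on_deriv_less_slope: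
  fixes f :: "real \<Rightarrow> real"
  assumes sc: "strictly_convex_on S f" and S: "convex S" "open S"
    and xy: "x \<in> S" "y \<in> S" "x < y" and f': "(f has_real_derivative f') (at x)"
  shows "f' < (f y - f x) / (y - x)"
proof -
  define m where "m = (x + y) / 2"
  have m: "m \<in> S" "x < m" "m < y"
    using convexD[OF S(1) xy(1,2), of "1/2" "1/2"] xy(3) by (auto simp: m_def add_divide_distrib)
  have "f' * (m - x) \<le> f m - f x"
    using convex_on_imp_above_tangent[OF strictly_convex_on_imp_convex_on[OF sc S(1)]
        convex_connected[OF S(1)] _ m(1)] xy(1) S(2) has_field_derivative_at_within[OF f']
    by (simp add: interior_open)
  then have "f' \<le> (f m - f x) / (m - x)"
    using m by (simp add: le_divide_eq)
  also have "\<dots> < (f y - f x) / (y - x)"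
    using strictly_convex_on_slope_less(1)[OF sc xy(1,2) m(2,3)] .
  finally show ?thesis .
qed

lemma strictly_convex_on_slope_less_deriv:
  fixes f :: "real \<Rightarrow> real"
  assumes sc: "strictly_convex_on S f" and S: "convex S" "open S"
    and xy: "x \<in> S" "y \<in> S" "x < y" and f': "(f has_real_derivative f') (at y)"
  shows "(f y - f x) / (y - x) < f'"
proof -
  define m where "m = (x + y) / 2"
  have m: "m \<in> S" "x < m" "m < y"
    using convexD[OF S(1) xy(1,2), of "1/2" "1/2"] xy(3) by (auto simp: m_def add_divide_distrib)
  have "(f y - f x) / (y - x) < (f y - f m) / (y - m)"
    using strictly_convex_on_slope_less(2)[OF sc xy(1,2) m(2,3)] .
  also have "f' * (m - y) \<le> f m - f y"
    using convex_on_imp_above_tangent[OF strictly_convex_on_imp_convex_on[OF sc S(1)]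
        convex_connected[OF S(1)] _ m(1)] xy(2) S(2) has_field_derivative_at_within[OF f']
    by (simp add: interior_open)
  then have "(f y - f m) / (y - m) \<le> f'"
    using m by (simp add: divide_le_eq algebra_simps)
  finally show ?thesis .
qed

lemma strongly_hyperbolic_pos: "strongly_hyperbolic f \<Longrightarrow> 0 < x \<Longrightarrow> 0 < f x"
  unfolding strongly_hyperbolic_def by auto

lemma strongly_hyperbolic_has_deriv:
  "strongly_hyperbolic f \<Longrightarrow> 0 < x \<Longrightarrow> (f has_real_derivative deriv f x) (at x)"
  unfolding strongly_hyperbolic_def using DERIV_deriv_iff_real_differentiable by blast

lemma strongly_hyperbolic_isCont: "strongly_hyperbolic f \<Longrightarrow> 0 < x \<Longrightarrow> isCont f x"
  using strongly_hyperbolic_has_deriv DERIV_isCont by blast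

lemma strongly_hyperbolic_tendsto_0: "strongly_hyperbolic f \<Longrightarrow> (f \<longlongrightarrow> 0) at_top"
  unfolding strongly_hyperbolic_def by auto

lemma strongly_hyperbolic_tendsto_0_shift:
  "strongly_hyperbolic f \<Longrightarrow> ((\<lambda>z. f (b + z)) \<longlongrightarrow> 0) at_top"
  using filterlim_compose[OF strongly_hyperbolic_tendsto_0
      filterlim_tendsto_add_at_top[OF tendsto_const filterlim_ident]] by blast

lemma strongly_hyperbolic_at_right_0: "strongly_hyperbolic f \<Longrightarrow> filterlim f at_top (at_right 0)"
  unfolding strongly_hyperbolic_def by auto

lemma strongly_hyperbolic_deriv_less_slope:
  assumes "strongly_hyperbolic f" "0 < x" "x < y"
  shows "deriv f x < (f y - f x) / (y - x)"
  using assms strictly_convex_on_deriv_less_slope[of "{0<..}" f x y]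
    strongly_hyperbolic_has_deriv[of f x] unfolding strongly_hyperbolic_def by auto

lemma strongly_hyperbolic_slope_less_deriv:
  assumes "strongly_hyperbolic f" "0 < x" "x < y"
  shows "(f y - f x) / (y - x) < deriv f y"
  using assms strictly_convex_on_slope_less_deriv[of "{0<..}" f x y]
    strongly_hyperbolic_has_deriv[of f y] unfolding strongly_hyperbolic_def by auto

lemma strongly_hyperbolic_deriv_neg:
  assumes sh: "strongly_hyperbolic f" and x: "0 < x"
  shows "deriv f x < 0"
proof (rule ccontr)
  assume "\<not> deriv f x < 0"
  then have increasing: "f x < f y" if "x < y" for y
  proof -
    have "0 < (f y - f x) / (y - x)"
      using strongly_hyperbolic_deriv_less_slope[OF sh x that] \<open>\<not> deriv f x < 0\<close> by linarith
    then show ?thesis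
      using that by (simp add: zero_less_divide_iff)
  qed
  have "eventually (\<lambda>y. f y < f x) at_top"
    using order_tendstoD(2)[OF strongly_hyperbolic_tendsto_0[OF sh]]
      strongly_hyperbolic_pos[OF sh x] by simp
  then obtain y where "x < y" "f y < f x"
    by (rule eventually_at_top_obtain)
  then show False
    using increasing by fastforce
qed

lemma strongly_hyperbolic_decreasing:
  assumes "strongly_hyperbolic f" "0 < x" "x < y"
  shows "f y < f x"
proof -
  have "(f y - f x) / (y - x) < 0"
    using strongly_hyperbolic_slope_less_deriv[OF assms]
      strongly_hyperbolic_deriv_neg[OF assms(1), of y] assms by linarith
  then show ?thesis
    using assms by (simp add: divide_less_0_iff)
qed

lemma strongly_hyperbolic_deriv_increasing:
  assumes "strongly_hyperbolic f" "0 < x" "x < y"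
  shows "deriv f x < deriv f y"
  using strongly_hyperbolic_deriv_less_slope[OF assms]
    strongly_hyperbolic_slope_less_deriv[OF assms] by linarith

lemma strongly_hyperbolic_surj:
  assumes sh: "strongly_hyperbolic f" and w: "0 < w"
  obtains t where "0 < t" "f t = w"
proof -
  have "eventually (\<lambda>y. w < f y) (at_right 0)"
    using strongly_hyperbolic_at_right_0[OF sh] by (simp add: filterlim_at_top_dense)
  then obtain y1 where y1: "0 < y1" "y1 < 1" "w < f y1"
    using zero_less_one by (rule eventually_at_right_obtain)
  have "eventually (\<lambda>y. f y < w) at_top"
    using order_tendstoD(2)[OF strongly_hyperbolic_tendsto_0[OF sh] w] .
  then obtain y2 where y2: "1 < y2" "f y2 < w"
    by (rule eventually_at_top_obtain)
  have "\<exists>t. y1 \<le> t \<and> t \<le> y2 \<and> f t = w"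
    using y1 y2 strongly_hyperbolic_isCont[OF sh] by (intro IVT2) auto
  then obtain t where "y1 \<le> t" "f t = w"
    by blast
  with y1 show thesis
    by (intro that) auto
qed

lemma strongly_hyperbolic_scaled_shift_eq:
  assumes sh: "strongly_hyperbolic f" and a: "0 < a" "a < a'" and e: "0 < e"
  obtains y where "0 < y" "a * f y = a' * f (y + e)"
proof -
  define h where "h y = a * f y - a' * f (y + e)" for y
  have "eventually (\<lambda>y. a' * f e / a < f y) (at_right 0)"
    using strongly_hyperbolic_at_right_0[OF sh] by (simp add: filterlim_at_top_dense)
  then obtain y1 where y1: "0 < y1" "y1 < 1" "a' * f e / a < f y1"
    using zero_less_one by (rule eventually_at_right_obtain)
  have "a' * f (y1 + e) < a' * f e"
    using strongly_hyperbolic_decreasing[OF sh, of e "y1 + e"] e y1 a by simp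
  moreover have "a' * f e < a * f y1"
    using y1 a by (simp add: divide_less_eq mult.commute)
  ultimately have h1: "0 < h y1"
    by (simp add: h_def)
  have "((\<lambda>y. f (y + e) / f y) \<longlongrightarrow> 1) at_top"
    using sh unfolding strongly_hyperbolic_def by auto
  then have "eventually (\<lambda>y. a / a' < f (y + e) / f y) at_top"
    using a by (intro order_tendstoD(1)) auto
  then obtain y2 where y2: "y1 < y2" "a / a' < f (y2 + e) / f y2"
    by (rule eventually_at_top_obtain)
  then have h2: "h y2 < 0"
    using strongly_hyperbolic_pos[OF sh, of y2] y1 a by (simp add: h_def divide_simps mult.commute)
  have "isCont h y" if "y1 \<le> y" for y
  proof -
    have "isCont (\<lambda>y. f (y + e)) y"
      using continuous_at_compose[of y "\<lambda>y. y + e" f] strongly_hyperbolic_isCont[OF sh, of "y + e"]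
        that y1 e by (simp add: o_def)
    then show ?thesis
      unfolding h_def using strongly_hyperbolic_isCont[OF sh, of y] that y1 by (intro continuous_intros) auto
  qed
  then obtain y where "y1 \<le> y" "h y = 0"
    using IVT2[of h y2 0 y1] h1 h2 y2 by fastforce
  with y1 show thesis
    by (intro that) (auto simp: h_def)
qed

text \<open>Equivalently, \<open>x \<mapsto> f'(x + d) / f'(x)\<close> is strictly increasing; this is where the
  strict log-convexity of \<open>|f'|\<close> enters.\<close>

lemma strongly_hyperbolic_deriv_shift_ratio:
  assumes sh: "strongly_hyperbolic f" and "0 < x" "x < y" "0 < d"
  shows "deriv f (x + d) * deriv f y < deriv f (y + d) * deriv f x"
proof -
  define G where "G t = - deriv f t" for t
  have G: "0 < G t" if "0 < t" for t
    using strongly_hyperbolic_deriv_neg[OF sh that] by (simp add: G_def)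
  have ln_G: "ln \<bar>deriv f t\<bar> = ln (G t)" if "0 < t" for t
    using G[OF that] by (simp add: G_def)
  have sc: "strictly_convex_on {0<..} (\<lambda>t. ln (G t))"
    using sh unfolding strongly_hyperbolic_def strictly_convex_on_def
    by (simp add: ln_G add_pos_pos)
  have "(ln (G (x + d)) - ln (G x)) / ((x + d) - x) < (ln (G (y + d)) - ln (G x)) / ((y + d) - x)"
    using strictly_convex_on_slope_less(1)[OF sc, of x "y + d" "x + d"] assms by auto
  also have "\<dots> < (ln (G (y + d)) - ln (G y)) / ((y + d) - y)"
    using strictly_convex_on_slope_less(2)[OF sc, of x "y + d" y] assms by auto
  finally have "ln (G (x + d)) + ln (G y) < ln (G (y + d)) + ln (G x)"
    using assms by (simp add: divide_less_cancel)
  then have "ln (G (x + d) * G y) < ln (G (y + d) * G x)"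
    using G[of "x + d"] G[of y] G[of "y + d"] G[of x] assms by (simp add: ln_mult)
  then have "G (x + d) * G y < G (y + d) * G x"
    using G[of "x + d"] G[of y] G[of "y + d"] G[of x] assms by simp
  then show ?thesis
    by (simp add: G_def)
qed

lemma strongly_hyperbolic_cauchy_mvt_shift:
  assumes sh: "strongly_hyperbolic f" and "0 < s" "s < t" "0 < d"
  obtains \<xi> where "s < \<xi>" "\<xi> < t"
    "(f s - f t) * deriv f (\<xi> + d) = (f (s + d) - f (t + d)) * deriv f \<xi>"
proof -
  have shifted: "((\<lambda>z. f (z + d)) has_real_derivative deriv f (z + d)) (at z)" if "0 < z" for z
    using DERIV_shift[of f "deriv f (z + d)" z d] strongly_hyperbolic_has_deriv[OF sh, of "z + d"]
      that assms by simp
  have "\<exists>\<xi>. s < \<xi> \<and> \<xi> < t \<and> (f t - f s) * deriv f (\<xi> + d) = (f (t + d) - f (s + d)) * deriv f \<xi>"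
  proof (rule GMVT'[where g = "\<lambda>z. f (z + d)" and f' = "deriv f" and g' = "\<lambda>z. deriv f (z + d)"])
    show "isCont f z" "isCont (\<lambda>z. f (z + d)) z" if "s \<le> z" "z \<le> t" for z
      using strongly_hyperbolic_isCont[OF sh] DERIV_isCont[OF shifted] that assms by auto
    show "(f has_real_derivative deriv f z) (at z)"
      "((\<lambda>z. f (z + d)) has_real_derivative deriv f (z + d)) (at z)" if "s < z" "z < t" for z
      using strongly_hyperbolic_has_deriv[OF sh] shifted that assms by auto
  qed fact
  then show thesis
    using that by (auto simp: algebra_simps)
qed

text \<open>By Cauchy's mean value theorem the ratio \<open>(f (s + d) - f (t + d)) / (f s - f t)\<close> equals
  \<open>f'(\<xi> + d) / f'(\<xi>)\<close> for some \<open>\<xi> \<in> (s, t)\<close>, which the monotonicity of \<open>f'(x + d) / f'(x)\<close>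
  compares with its value at \<open>\<beta>\<close>.\<close>

lemma strongly_hyperbolic_increment_ratio:
  assumes sh: "strongly_hyperbolic f" and "0 < s" "s < t" "0 < d" "0 < \<beta>"
  shows "\<beta> \<le> s \<Longrightarrow> (f s - f t) * (- deriv f (\<beta> + d)) < (f (s + d) - f (t + d)) * (- deriv f \<beta>)"
    and "t \<le> \<beta> \<Longrightarrow> (f (s + d) - f (t + d)) * (- deriv f \<beta>) < (f s - f t) * (- deriv f (\<beta> + d))"
proof -
  obtain \<xi> where \<xi>: "s < \<xi>" "\<xi> < t"
    and mvt: "(f s - f t) * deriv f (\<xi> + d) = (f (s + d) - f (t + d)) * deriv f \<xi>"
    using strongly_hyperbolic_cauchy_mvt_shift[OF sh assms(2-4)] .
  have A: "0 < f s - f t"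
    using strongly_hyperbolic_decreasing[OF sh, of s t] assms by simp
  have mvt': "(f (s + d) - f (t + d)) * deriv f \<beta> * deriv f \<xi> = (f s - f t) * (deriv f (\<xi> + d) * deriv f \<beta>)"
    by (metis mvt mult.assoc mult.commute)
  have \<xi>_neg: "deriv f \<xi> < 0"
    using strongly_hyperbolic_deriv_neg[OF sh, of \<xi>] \<xi> assms by simp
  show "(f s - f t) * (- deriv f (\<beta> + d)) < (f (s + d) - f (t + d)) * (- deriv f \<beta>)"
    if "\<beta> \<le> s"
  proof -
    have "((f s - f t) * deriv f (\<beta> + d)) * deriv f \<xi> = (f s - f t) * (deriv f (\<beta> + d) * deriv f \<xi>)"
      by (simp only: mult.assoc)
    also have "\<dots> < (f s - f t) * (deriv f (\<xi> + d) * deriv f \<beta>)"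
      using strongly_hyperbolic_deriv_shift_ratio[OF sh, of \<beta> \<xi> d] A \<xi> that assms by simp
    also have "\<dots> = ((f (s + d) - f (t + d)) * deriv f \<beta>) * deriv f \<xi>"
      by (rule mvt'[symmetric])
    finally show ?thesis
      using \<xi>_neg by (simp add: mult_less_cancel_right)
  qed
  show "(f (s + d) - f (t + d)) * (- deriv f \<beta>) < (f s - f t) * (- deriv f (\<beta> + d))"
    if "t \<le> \<beta>"
  proof -
    have "((f (s + d) - f (t + d)) * deriv f \<beta>) * deriv f \<xi> = (f s - f t) * (deriv f (\<xi> + d) * deriv f \<beta>)"
      by (rule mvt')
    also have "\<dots> < (f s - f t) * (deriv f (\<beta> + d) * deriv f \<xi>)"
      using strongly_hyperbolic_deriv_shift_ratio[OF sh, of \<xi> \<beta> d] A \<xi> that assms by simp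
    also have "\<dots> = ((f s - f t) * deriv f (\<beta> + d)) * deriv f \<xi>"
      by (simp only: mult.assoc)
    finally show ?thesis
      using \<xi>_neg by (simp add: mult_less_cancel_right)
  qed
qed

text \<open>Equivalently, \<open>f / |f'|\<close> is strictly increasing: let \<open>t \<rightarrow> \<infinity>\<close> in the increment ratio,
  keeping the margin \<open>\<delta>\<close> gained on \<open>[0, 1]\<close> to stay strict.\<close>

lemma strongly_hyperbolic_value_over_deriv_less:
  assumes sh: "strongly_hyperbolic f" and \<beta>: "0 < \<beta>1" "\<beta>1 < \<beta>2"
  shows "f \<beta>1 * (- deriv f \<beta>2) < f \<beta>2 * (- deriv f \<beta>1)"
proof -
  define G where "G t = - deriv f t" for t
  have increment: "(f (\<beta>1 + s) - f (\<beta>1 + t)) * G \<beta>2 < (f (\<beta>2 + s) - f (\<beta>2 + t)) * G \<beta>1"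
    if "0 \<le> s" "s < t" for s t
    using strongly_hyperbolic_increment_ratio(1)[OF sh, of "\<beta>1 + s" "\<beta>1 + t" "\<beta>2 - \<beta>1" \<beta>1] \<beta> that
    by (simp add: G_def add.commute add.left_commute)
  define \<delta> where "\<delta> = (f \<beta>2 - f (\<beta>2 + 1)) * G \<beta>1 - (f \<beta>1 - f (\<beta>1 + 1)) * G \<beta>2"
  have \<delta>: "0 < \<delta>"
    using increment[of 0 1] by (simp add: \<delta>_def)
  have "eventually (\<lambda>z. (f \<beta>1 - f (\<beta>1 + z)) * G \<beta>2 + \<delta> \<le> (f \<beta>2 - f (\<beta>2 + z)) * G \<beta>1) at_top"
    using eventually_ge_at_top[of 2]
  proof eventually_elim
    case (elim z)
    then show ?case
      using increment[of 1 z] by (simp add: \<delta>_def algebra_simps)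
  qed
  moreover have "((\<lambda>z. (f \<beta>1 - f (\<beta>1 + z)) * G \<beta>2 + \<delta>) \<longlongrightarrow> (f \<beta>1 - 0) * G \<beta>2 + \<delta>) at_top"
    "((\<lambda>z. (f \<beta>2 - f (\<beta>2 + z)) * G \<beta>1) \<longlongrightarrow> (f \<beta>2 - 0) * G \<beta>1) at_top"
    by (intro tendsto_intros strongly_hyperbolic_tendsto_0_shift[OF sh])+
  ultimately have "(f \<beta>1 - 0) * G \<beta>2 + \<delta> \<le> (f \<beta>2 - 0) * G \<beta>1"
    by (intro tendsto_le[OF trivial_limit_at_top_linorder]) auto
  then show ?thesis
    using \<delta> by (simp add: G_def)
qed

lemma strongly_hyperbolic_shifted_value_over_deriv_less:
  assumes sh: "strongly_hyperbolic f" and r: "0 < r2" "r2 < r1" and P: "0 \<le> P2" "P2 \<le> P1"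
  shows "(P2 + f r2) / (- deriv f r2) < (P1 + f r1) / (- deriv f r1)"
proof -
  define G where "G t = - deriv f t" for t
  have G: "0 < G r1" "0 < G r2" "G r1 < G r2"
    using strongly_hyperbolic_deriv_neg[OF sh] strongly_hyperbolic_deriv_increasing[OF sh r] r
    by (auto simp: G_def)
  have "P2 / G r2 \<le> P1 / G r1"
    by (rule frac_le) (use P G in auto)
  moreover have "f r2 / G r2 < f r1 / G r1"
    using strongly_hyperbolic_value_over_deriv_less[OF sh r] G by (simp add: G_def divide_simps mult.commute)
  ultimately show ?thesis
    by (simp add: G_def add_divide_distrib)
qed

section \<open>The curves of \<open>C\<^sup>-\<close>\<close>

definition profile :: "(real \<Rightarrow> real) \<Rightarrow> (real \<Rightarrow> real) \<Rightarrow> real \<Rightarrow> real" where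
  "profile f1 f2 t = (if 0 < t then f1 t else - f2 (- t))"

definition profile_deriv :: "(real \<Rightarrow> real) \<Rightarrow> (real \<Rightarrow> real) \<Rightarrow> real \<Rightarrow> real" where
  "profile_deriv f1 f2 t = (if 0 < t then deriv f1 t else deriv f2 (- t))"

definition normalized_increment :: "(real \<Rightarrow> real) \<Rightarrow> (real \<Rightarrow> real) \<Rightarrow> real \<Rightarrow> real \<Rightarrow> real" where
  "normalized_increment f1 f2 X b = (profile f1 f2 (b + X) - profile f1 f2 b) / profile_deriv f1 f2 b"

lemma fabc_eq_profile: "fabc f1 f2 a b c x = a * profile f1 f2 (x + b) + c"
  by (auto simp: fabc_def profile_def)

lemma normalized_increment_pos_eq:
  "0 < b \<Longrightarrow> 0 < b + X \<Longrightarrow> normalized_increment f1 f2 X b = (f1 (b + X) - f1 b) / deriv f1 b"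
  by (simp add: normalized_increment_def profile_def profile_deriv_def)

lemma normalized_increment_neg_eq:
  "b < 0 \<Longrightarrow> b + X < 0 \<Longrightarrow> normalized_increment f1 f2 X b = (f2 (- b) - f2 (- b - X)) / deriv f2 (- b)"
  by (simp add: normalized_increment_def profile_def profile_deriv_def)

lemma normalized_increment_straddle_eq:
  "b < 0 \<Longrightarrow> 0 < b + X \<Longrightarrow> normalized_increment f1 f2 X b = (f1 (b + X) + f2 (- b)) / deriv f2 (- b)"
  by (simp add: normalized_increment_def profile_def profile_deriv_def)

lemma normalized_increment_straddle_eq':
  "0 < b \<Longrightarrow> b + X < 0 \<Longrightarrow> normalized_increment f1 f2 X b = (f2 (- b - X) + f1 b) / (- deriv f1 b)"
  by (simp add: normalized_increment_def profile_def profile_deriv_def divide_simps)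

lemma point_cases:
  obtains x y where "p = (Fin x, Fin y)" | x where "p = (Fin x, Infty)"
    | y where "p = (Infty, Fin y)" | "p = (Infty, Infty)"
  by (metis ext.exhaust prod.exhaust)

lemma mem_curve_fabc [simp]:
  "(Fin x, Fin y) \<in> curve_fabc f1 f2 a b c \<longleftrightarrow> x \<noteq> - b \<and> y = fabc f1 f2 a b c x"
  "(Fin x, Infty) \<in> curve_fabc f1 f2 a b c \<longleftrightarrow> x = - b"
  "(Infty, Fin y) \<in> curve_fabc f1 f2 a b c \<longleftrightarrow> y = c"
  "(Infty, Infty) \<notin> curve_fabc f1 f2 a b c"
  by (auto simp: curve_fabc_def)

lemma mem_curve_line [simp]:
  "(Fin x, Fin y) \<in> curve_line s t \<longleftrightarrow> y = s * x + t"
  "(Fin x, Infty) \<notin> curve_line s t"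
  "(Infty, Fin y) \<notin> curve_line s t"
  "(Infty, Infty) \<in> curve_line s t"
  by (auto simp: curve_line_def)

lemma Cminus_cases:
  assumes "D \<in> Cminus f1 f2"
  obtains a b c where "0 < a" "D = curve_fabc f1 f2 a b c"
    | s t where "s < 0" "D = curve_line s t"
  using assms unfolding Cminus_def by blast

lemma Cminus_through_Infty_Infty:
  assumes "D \<in> Cminus f1 f2" "(Infty, Infty) \<in> D"
  obtains s t where "s < 0" "D = curve_line s t"
  using assms by (cases rule: Cminus_cases) auto

lemma Cminus_through_Infty_Fin:
  assumes "D \<in> Cminus f1 f2" "(Infty, Fin v) \<in> D"
  obtains a b where "0 < a" "D = curve_fabc f1 f2 a b v"
  using assms by (cases rule: Cminus_cases) auto

lemma Cminus_through_Fin_Infty: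
  assumes "D \<in> Cminus f1 f2" "(Fin u, Infty) \<in> D"
  obtains a c where "0 < a" "D = curve_fabc f1 f2 a (- u) c"
  using assms by (cases rule: Cminus_cases) auto

text \<open>Only meaningful when \<open>u\<close> is the abscissa of a finite point of \<open>D\<close>, which keeps \<open>u + b\<close>
  away from the junk value of \<open>profile_deriv\<close> at \<open>0\<close>.\<close>

definition has_slope_at :: "(real \<Rightarrow> real) \<Rightarrow> (real \<Rightarrow> real) \<Rightarrow> point set \<Rightarrow> real \<Rightarrow> real \<Rightarrow> bool" where
  "has_slope_at f1 f2 D u m \<longleftrightarrow>
     (\<exists>s t. s < 0 \<and> D = curve_line s t \<and> m = s) \<or>
     (\<exists>a b c. 0 < a \<and> D = curve_fabc f1 f2 a b c \<and> m = a * profile_deriv f1 f2 (u + b))"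

lemma Cminus_has_slope_at:
  assumes "D \<in> Cminus f1 f2"
  obtains m where "has_slope_at f1 f2 D u m"
  using assms
proof (cases rule: Cminus_cases)
  case (1 a b c)
  then show ?thesis
    using that[of "a * profile_deriv f1 f2 (u + b)"] by (auto simp: has_slope_at_def)
next
  case (2 s t)
  then show ?thesis
    using that[of s] by (auto simp: has_slope_at_def)
qed

lemma line_touch_at_infinity_same_slope:
  fixes s t s' t' :: real
  assumes touch: "curve_line s t \<inter> curve_line s' t' = {(Infty, Infty)}"
  shows "s = s'"
proof (rule ccontr)
  assume "s \<noteq> s'"
  define x where "x = (t' - t) / (s - s')"
  have "s * x + t = s' * x + t'"
    using \<open>s \<noteq> s'\<close> by (simp add: x_def field_simps)
  then have "(Fin x, Fin (s * x + t)) \<in> curve_line s t \<inter> curve_line s' t'"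
    by simp
  then show False
    by (simp only: touch) simp
qed

lemma fabc_touch_zero_unique:
  assumes touch: "curve_fabc f1 f2 a b c \<inter> curve_fabc f1 f2 a' b' c' = {(Fin u, Fin v)}"
    and "z \<noteq> - b" "z \<noteq> - b'" "fabc f1 f2 a b c z = fabc f1 f2 a' b' c' z"
  shows "z = u"
proof -
  have "(Fin z, Fin (fabc f1 f2 a b c z)) \<in> curve_fabc f1 f2 a b c \<inter> curve_fabc f1 f2 a' b' c'"
    using assms(2-4) by simp
  then have "(Fin z, Fin (fabc f1 f2 a b c z)) \<in> {(Fin u, Fin v)}"
    by (simp only: touch)
  then show ?thesis
    by simp
qed

locale strongly_hyperbolic_pair =
  fixes f1 f2 :: "real \<Rightarrow> real"
  assumes sh1: "strongly_hyperbolic f1" and sh2: "strongly_hyperbolic f2"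
begin

section \<open>The profile and its normalized increment\<close>

lemma profile_deriv_neg: "t \<noteq> 0 \<Longrightarrow> profile_deriv f1 f2 t < 0"
  using strongly_hyperbolic_deriv_neg[OF sh1, of t] strongly_hyperbolic_deriv_neg[OF sh2, of "- t"]
  by (auto simp: profile_deriv_def)

lemma profile_has_deriv:
  assumes "t \<noteq> 0"
  shows "(profile f1 f2 has_real_derivative profile_deriv f1 f2 t) (at t)"
proof (cases "0 < t")
  case True
  then show ?thesis
    using strongly_hyperbolic_has_deriv[OF sh1 True]
    by (subst has_field_derivative_cong_eventually[where g = f1])
      (auto simp: profile_def profile_deriv_def eventually_at_topological intro!: exI[of _ "{0<..}"])
next
  case False
  then have "t < 0"
    using assms by simp
  have "((\<lambda>t. - f2 (- t)) has_real_derivative deriv f2 (- t)) (at t)"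
    using strongly_hyperbolic_has_deriv[OF sh2, of "- t"] \<open>t < 0\<close>
    by (auto intro!: derivative_eq_intros DERIV_chain2[of f2])
  then show ?thesis
    using \<open>t < 0\<close>
    by (subst has_field_derivative_cong_eventually[where g = "\<lambda>t. - f2 (- t)"])
      (auto simp: profile_def profile_deriv_def eventually_at_topological intro!: exI[of _ "{..<0}"])
qed

lemma profile_inj:
  assumes "s \<noteq> 0" "t \<noteq> 0" "profile f1 f2 s = profile f1 f2 t"
  shows "s = t"
proof -
  have "profile f1 f2 x \<noteq> profile f1 f2 y" if "x < y" "x \<noteq> 0" "y \<noteq> 0" for x y
    using that strongly_hyperbolic_decreasing[OF sh1, of x y] strongly_hyperbolic_decreasing[OF sh2, of "- y" "- x"]
      strongly_hyperbolic_pos[OF sh1, of y] strongly_hyperbolic_pos[OF sh2, of "- x"]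
    by (auto simp: profile_def)
  then show ?thesis
    using assms by (metis linorder_neqE_linordered_idom)
qed

lemma profile_over_deriv_inj:
  assumes "s \<noteq> 0" "t \<noteq> 0"
    and "profile f1 f2 s / profile_deriv f1 f2 s = profile f1 f2 t / profile_deriv f1 f2 t"
  shows "s = t"
proof -
  have pos: "f1 x / deriv f1 x < 0" "f2 x / deriv f2 x < 0" if "0 < x" for x
    using that strongly_hyperbolic_pos[OF sh1] strongly_hyperbolic_pos[OF sh2]
      strongly_hyperbolic_deriv_neg[OF sh1] strongly_hyperbolic_deriv_neg[OF sh2]
    by (auto simp: divide_less_0_iff)
  have mono: "f x / deriv f x < f y / deriv f y" if "strongly_hyperbolic f" "0 < y" "y < x" for f x y
    using strongly_hyperbolic_value_over_deriv_less[OF that] that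
      strongly_hyperbolic_deriv_neg[OF that(1), of x] strongly_hyperbolic_deriv_neg[OF that(1), of y]
    by (intro divide_less_divide_neg) simp_all
  have "profile f1 f2 x / profile_deriv f1 f2 x \<noteq> profile f1 f2 y / profile_deriv f1 f2 y"
    if xy: "x < y" "x \<noteq> 0" "y \<noteq> 0" for x y
  proof -
    consider "0 < x" | "x < 0" "0 < y" | "y < 0"
      using xy by linarith
    then show ?thesis
    proof cases
      case 1
      then show ?thesis
        using mono[OF sh1 1 xy(1)] 1 xy by (simp add: profile_def profile_deriv_def)
    next
      case 2
      then show ?thesis
        using pos(1)[of y] pos(2)[of "- x"] by (simp add: profile_def profile_deriv_def)
    next
      case 3
      then show ?thesis
        using mono[OF sh2, of "- y" "- x"] xy 3 by (simp add: profile_def profile_deriv_def)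
    qed
  qed
  then show ?thesis
    using assms by (metis linorder_neqE_linordered_idom)
qed

lemma normalized_increment_pos_range:
  assumes b: "0 < b" "0 < b + X"
  shows "0 < X \<Longrightarrow> 0 < normalized_increment f1 f2 X b \<and> normalized_increment f1 f2 X b < X"
    and "X < 0 \<Longrightarrow> normalized_increment f1 f2 X b < X"
proof -
  have d: "deriv f1 b < 0"
    using strongly_hyperbolic_deriv_neg[OF sh1 b(1)] .
  show "0 < normalized_increment f1 f2 X b \<and> normalized_increment f1 f2 X b < X" if "0 < X"
  proof -
    have "deriv f1 b * X < f1 (b + X) - f1 b"
      using strongly_hyperbolic_deriv_less_slope[OF sh1 b(1), of "b + X"] that
      by (simp add: less_divide_eq)
    moreover have "f1 (b + X) < f1 b"
      using strongly_hyperbolic_decreasing[OF sh1 b(1), of "b + X"] that by simp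
    ultimately show ?thesis
      using d b by (simp add: normalized_increment_pos_eq divide_less_eq zero_less_divide_iff mult.commute)
  qed
  show "normalized_increment f1 f2 X b < X" if "X < 0"
  proof -
    have "f1 b - f1 (b + X) < deriv f1 b * (- X)"
      using strongly_hyperbolic_slope_less_deriv[OF sh1 b(2), of b] that
      by (simp add: field_simps)
    then show ?thesis
      using d b by (simp add: normalized_increment_pos_eq divide_less_eq algebra_simps)
  qed
qed

lemma normalized_increment_neg_range:
  assumes b: "b < 0" "b + X < 0"
  shows "0 < X \<Longrightarrow> X < normalized_increment f1 f2 X b"
    and "X < 0 \<Longrightarrow> X < normalized_increment f1 f2 X b \<and> normalized_increment f1 f2 X b < 0"
proof -
  have d: "deriv f2 (- b) < 0"
    using strongly_hyperbolic_deriv_neg[OF sh2, of "- b"] b by simp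
  show "X < normalized_increment f1 f2 X b" if "0 < X"
  proof -
    have "f2 (- b) - f2 (- b - X) < deriv f2 (- b) * X"
      using strongly_hyperbolic_slope_less_deriv[OF sh2, of "- b - X" "- b"] that b
      by (simp add: divide_less_eq)
    then show ?thesis
      using d b by (simp add: normalized_increment_neg_eq less_divide_eq algebra_simps)
  qed
  show "X < normalized_increment f1 f2 X b \<and> normalized_increment f1 f2 X b < 0" if "X < 0"
  proof -
    have "deriv f2 (- b) * (- X) < f2 (- b - X) - f2 (- b)"
      using strongly_hyperbolic_deriv_less_slope[OF sh2, of "- b" "- b - X"] that b
      by (simp add: field_simps)
    moreover have "f2 (- b - X) < f2 (- b)"
      using strongly_hyperbolic_decreasing[OF sh2, of "- b" "- b - X"] that b by simp
    ultimately show ?thesis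
      using d b by (simp add: normalized_increment_neg_eq less_divide_eq divide_less_0_iff algebra_simps)
  qed
qed

lemma normalized_increment_straddle_range:
  shows "b < 0 \<Longrightarrow> 0 < b + X \<Longrightarrow> normalized_increment f1 f2 X b < 0"
    and "0 < b \<Longrightarrow> b + X < 0 \<Longrightarrow> 0 < normalized_increment f1 f2 X b"
  using strongly_hyperbolic_pos[OF sh1, of "b + X"] strongly_hyperbolic_pos[OF sh2, of "- b"]
    strongly_hyperbolic_deriv_neg[OF sh2, of "- b"] strongly_hyperbolic_pos[OF sh1, of b]
    strongly_hyperbolic_pos[OF sh2, of "- b - X"] strongly_hyperbolic_deriv_neg[OF sh1, of b]
  by (simp_all add: normalized_increment_straddle_eq normalized_increment_straddle_eq'
      divide_less_0_iff zero_less_divide_iff)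

lemma normalized_increment_ne:
  assumes "X \<noteq> 0" "b \<noteq> 0" "b + X \<noteq> 0"
  shows "normalized_increment f1 f2 X b \<noteq> X"
  using assms normalized_increment_pos_range[of b X] normalized_increment_neg_range[of b X]
    normalized_increment_straddle_range[of b X]
  by (cases "0 < b"; cases "0 < b + X"; cases "0 < X") auto

lemma normalized_increment_pos_mono:
  assumes "X \<noteq> 0" "0 < b1" "0 < b1 + X" "b1 < b2"
  shows "normalized_increment f1 f2 X b1 < normalized_increment f1 f2 X b2"
proof -
  have "(f1 (b1 + X) - f1 b1) * deriv f1 b2 < (f1 (b2 + X) - f1 b2) * deriv f1 b1"
  proof (cases "0 < X")
    case True
    then show ?thesis
      using strongly_hyperbolic_increment_ratio(1)[OF sh1, of b1 "b1 + X" "b2 - b1" b1] assms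
      by (simp add: algebra_simps)
  next
    case False
    then show ?thesis
      using strongly_hyperbolic_increment_ratio(2)[OF sh1, of "b1 + X" b1 "b2 - b1" b1] assms
      by (simp add: algebra_simps)
  qed
  then show ?thesis
    using assms strongly_hyperbolic_deriv_neg[OF sh1, of b1] strongly_hyperbolic_deriv_neg[OF sh1, of b2]
    by (simp add: normalized_increment_pos_eq divide_less_divide_neg)
qed

lemma normalized_increment_neg_mono:
  assumes "X \<noteq> 0" "b2 < 0" "b2 + X < 0" "b1 < b2"
  shows "normalized_increment f1 f2 X b1 < normalized_increment f1 f2 X b2"
proof -
  have "(f2 (- b1) - f2 (- b1 - X)) * deriv f2 (- b2) < (f2 (- b2) - f2 (- b2 - X)) * deriv f2 (- b1)"
  proof (cases "0 < X")
    case True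
    then show ?thesis
      using strongly_hyperbolic_increment_ratio(2)[OF sh2, of "- b2 - X" "- b2" "b2 - b1" "- b2"] assms
      by (simp add: algebra_simps)
  next
    case False
    then show ?thesis
      using strongly_hyperbolic_increment_ratio(1)[OF sh2, of "- b2" "- b2 - X" "b2 - b1" "- b2"] assms
      by (simp add: algebra_simps)
  qed
  then show ?thesis
    using assms strongly_hyperbolic_deriv_neg[OF sh2, of "- b1"] strongly_hyperbolic_deriv_neg[OF sh2, of "- b2"]
    by (simp add: normalized_increment_neg_eq divide_less_divide_neg)
qed

lemma normalized_increment_straddle_mono:
  assumes "b1 < b2"
  shows "b1 < 0 \<Longrightarrow> 0 < b1 + X \<Longrightarrow> b2 < 0 \<Longrightarrow> normalized_increment f1 f2 X b1 < normalized_increment f1 f2 X b2"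
    and "0 < b1 \<Longrightarrow> b2 + X < 0 \<Longrightarrow> normalized_increment f1 f2 X b1 < normalized_increment f1 f2 X b2"
proof -
  assume b: "b1 < 0" "0 < b1 + X" "b2 < 0"
  have "(f1 (b2 + X) + f2 (- b2)) / (- deriv f2 (- b2)) < (f1 (b1 + X) + f2 (- b1)) / (- deriv f2 (- b1))"
    using strongly_hyperbolic_shifted_value_over_deriv_less[OF sh2, of "- b2" "- b1" "f1 (b2 + X)" "f1 (b1 + X)"]
      strongly_hyperbolic_pos[OF sh1, of "b2 + X"] strongly_hyperbolic_decreasing[OF sh1, of "b1 + X" "b2 + X"]
      assms b by simp
  then show "normalized_increment f1 f2 X b1 < normalized_increment f1 f2 X b2"
    using assms b by (simp add: normalized_increment_straddle_eq)
next
  assume b: "0 < b1" "b2 + X < 0"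
  have "(f2 (- b1 - X) + f1 b1) / (- deriv f1 b1) < (f2 (- b2 - X) + f1 b2) / (- deriv f1 b2)"
    using strongly_hyperbolic_shifted_value_over_deriv_less[OF sh1, of b1 b2 "f2 (- b1 - X)" "f2 (- b2 - X)"]
      strongly_hyperbolic_pos[OF sh2, of "- b1 - X"] strongly_hyperbolic_decreasing[OF sh2, of "- b2 - X" "- b1 - X"]
      assms b by simp
  then show "normalized_increment f1 f2 X b1 < normalized_increment f1 f2 X b2"
    using assms b by (simp add: normalized_increment_straddle_eq')
qed

lemma normalized_increment_inj:
  assumes "X \<noteq> 0"
  shows "inj_on (normalized_increment f1 f2 X) {b. b \<noteq> 0 \<and> b + X \<noteq> 0}"
proof -
  let ?g = "normalized_increment f1 f2 X"
  define N where "N = {b. b < 0 \<and> b + X < 0}"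
  define P where "P = {b. 0 < b \<and> 0 < b + X}"
  define S where "S = {b. b < 0 \<and> 0 < b + X \<or> 0 < b \<and> b + X < 0}"
  have N_range: "X < ?g b \<and> (X < 0 \<longrightarrow> ?g b < 0)" if "b \<in> N" for b
    using that normalized_increment_neg_range[of b X] assms by (cases "0 < X") (auto simp: N_def)
  have P_range: "?g b < X \<and> (0 < X \<longrightarrow> 0 < ?g b)" if "b \<in> P" for b
    using that normalized_increment_pos_range[of b X] assms by (cases "0 < X") (auto simp: P_def)
  have S_range: "(0 < X \<longrightarrow> ?g b < 0) \<and> (X < 0 \<longrightarrow> 0 < ?g b)" if "b \<in> S" for b
    using that normalized_increment_straddle_range[of b X] by (auto simp: S_def)
  have "strict_mono_on N ?g" "strict_mono_on P ?g"
    using normalized_increment_neg_mono[OF assms] normalized_increment_pos_mono[OF assms]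
    by (auto intro!: strict_mono_onI simp: N_def P_def)
  moreover have "strict_mono_on S ?g"
    using normalized_increment_straddle_mono
    by (auto intro!: strict_mono_onI simp: S_def)
  moreover have "?g ` N \<inter> ?g ` P = {}" "?g ` N \<inter> ?g ` S = {}" "?g ` P \<inter> ?g ` S = {}"
    using assms by (auto dest!: N_range P_range S_range)
  ultimately have "inj_on ?g (N \<union> P \<union> S)"
    by (intro inj_on_Un3_strict_mono_on)
  moreover have "{b. b \<noteq> 0 \<and> b + X \<noteq> 0} = N \<union> P \<union> S"
    by (auto simp: N_def P_def S_def)
  ultimately show ?thesis
    by simp
qed

section \<open>Curves touching at a finite point have equal slopes\<close>

lemma fabc_has_deriv:
  assumes "u \<noteq> - b"
  shows "(fabc f1 f2 a b c has_real_derivative a * profile_deriv f1 f2 (u + b)) (at u)"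
proof -
  have "(profile f1 f2 has_real_derivative profile_deriv f1 f2 (u + b)) (at (u + b))"
    using profile_has_deriv assms by simp
  then have "((\<lambda>x. profile f1 f2 (x + b)) has_real_derivative profile_deriv f1 f2 (u + b)) (at u)"
    using DERIV_shift by blast
  then show ?thesis
    unfolding fabc_eq_profile[abs_def] by (auto intro!: derivative_eq_intros)
qed

lemma fabc_isCont: "u \<noteq> - b \<Longrightarrow> isCont (fabc f1 f2 a b c) u"
  using fabc_has_deriv DERIV_isCont by blast

lemma fabc_tendsto_within:
  "x \<noteq> - b \<Longrightarrow> (fabc f1 f2 a b c \<longlongrightarrow> fabc f1 f2 a b c x) (at x within S)"
  using continuous_at_imp_continuous_at_within[OF fabc_isCont]
  by (simp add: continuous_within)

lemma fabc_tendsto_at_top: "(fabc f1 f2 a b c \<longlongrightarrow> c) at_top"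
proof -
  have "eventually (\<lambda>x. a * f1 (b + x) + c = fabc f1 f2 a b c x) at_top"
    using eventually_gt_at_top[of "- b"] by eventually_elim (simp add: fabc_def add.commute)
  moreover have "((\<lambda>x. a * f1 (b + x) + c) \<longlongrightarrow> a * 0 + c) at_top"
    by (intro tendsto_intros strongly_hyperbolic_tendsto_0_shift[OF sh1])
  ultimately show ?thesis
    by (simp add: tendsto_cong)
qed

lemma fabc_tendsto_at_bot: "(fabc f1 f2 a b c \<longlongrightarrow> c) at_bot"
proof -
  have "eventually (\<lambda>x. - a * f2 (- b + x) + c = fabc f1 f2 a b c (- x)) at_top"
    using eventually_gt_at_top[of b] by eventually_elim (simp add: fabc_def add.commute)
  moreover have "((\<lambda>x. - a * f2 (- b + x) + c) \<longlongrightarrow> - a * 0 + c) at_top"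
    by (intro tendsto_intros strongly_hyperbolic_tendsto_0_shift[OF sh2])
  ultimately show ?thesis
    unfolding filterlim_at_bot_mirror by (simp add: tendsto_cong)
qed

lemma fabc_at_right_pole:
  assumes "0 < a"
  shows "filterlim (fabc f1 f2 a b c) at_top (at_right (- b))"
proof -
  have "eventually (\<lambda>x. c + a * f1 x = fabc f1 f2 a b c (x + - b)) (at_right 0)"
    by (simp add: fabc_def eventually_mono[OF eventually_at_right_less])
  moreover have "filterlim (\<lambda>x. c + a * f1 x) at_top (at_right 0)"
    by (intro filterlim_tendsto_add_at_top[OF tendsto_const] filterlim_tendsto_pos_mult_at_top[OF tendsto_const]
        assms strongly_hyperbolic_at_right_0[OF sh1])
  ultimately have "filterlim (\<lambda>x. fabc f1 f2 a b c (x + - b)) at_top (at_right 0)"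
    by (rule filterlim_cong[OF refl refl, THEN iffD1])
  then show ?thesis
    unfolding filterlim_at_right_to_0[of _ _ "- b"] .
qed

lemma fabc_at_left_pole:
  assumes "0 < a"
  shows "filterlim (fabc f1 f2 a b c) at_bot (at_left (- b))"
proof -
  have "eventually (\<lambda>x. c + - (a * f2 x) = fabc f1 f2 a b c (- (x + b))) (at_right 0)"
    by (simp add: fabc_def eventually_mono[OF eventually_at_right_less])
  moreover have "filterlim (\<lambda>x. c + - (a * f2 x)) at_bot (at_right 0)"
    using filterlim_tendsto_pos_mult_at_top[OF tendsto_const assms strongly_hyperbolic_at_right_0[OF sh2]]
    by (intro filterlim_tendsto_add_at_bot_iff[THEN iffD2, OF tendsto_const])
      (simp add: filterlim_uminus_at_top)
  ultimately have "filterlim (\<lambda>x. fabc f1 f2 a b c (- (x + b))) at_bot (at_right 0)"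
    by (rule filterlim_cong[OF refl refl, THEN iffD1])
  then show ?thesis
    by (simp add: filterlim_at_left_to_right filterlim_at_right_to_0[of _ _ b])
qed

lemma line_fabc_same_sign_around:
  assumes a: "0 < a" and s: "s < 0" and u: "u \<noteq> - b"
  obtains a0 b0 where "a0 < u" "u < b0" "\<And>x. a0 \<le> x \<Longrightarrow> x \<le> b0 \<Longrightarrow> x \<noteq> - b"
    "0 < (s * a0 + t - fabc f1 f2 a b c a0) * (s * b0 + t - fabc f1 f2 a b c b0)"
proof -
  let ?g = "fabc f1 f2 a b c"
  have line_at_pole: "((\<lambda>x. s * x + t) \<longlongrightarrow> s * - b + t) (at (- b) within S)" for S
    by (intro tendsto_intros)
  show thesis
  proof (cases "- b < u")
    case True
    have "eventually (\<lambda>x. s * x + t < ?g x) (at_right (- b))"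
      using tendsto_filterlim_at_top_imp_eventually_less[OF line_at_pole fabc_at_right_pole[OF a]] by simp
    then obtain a0 where a0: "- b < a0" "a0 < u" "s * a0 + t < ?g a0"
      using True by (rule eventually_at_right_obtain)
    have "eventually (\<lambda>x. s * x + t < ?g x) at_top"
      using filterlim_at_bot_tendsto_imp_eventually_less[OF filterlim_neg_slope_at_top[OF s] fabc_tendsto_at_top] .
    then obtain b0 where b0: "u < b0" "s * b0 + t < ?g b0"
      by (rule eventually_at_top_obtain)
    show thesis
      using a0 b0 by (intro that[of a0 b0]) (auto simp: mult_neg_neg)
  next
    case False
    have "eventually (\<lambda>x. ?g x < s * x + t) at_bot"
      using tendsto_filterlim_at_top_imp_eventually_less[OF fabc_tendsto_at_bot filterlim_neg_slope_at_bot[OF s]] .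
    then obtain a0 where a0: "a0 < u" "?g a0 < s * a0 + t"
      by (rule eventually_at_bot_obtain)
    have "eventually (\<lambda>x. ?g x < s * x + t) (at_left (- b))"
      using filterlim_at_bot_tendsto_imp_eventually_less[OF fabc_at_left_pole[OF a] line_at_pole] by simp
    moreover have "u < - b"
      using False u by simp
    ultimately obtain b0 where b0: "u < b0" "b0 < - b" "?g b0 < s * b0 + t"
      by (rule eventually_at_left_obtain)
    show thesis
      using a0 b0 by (intro that[of a0 b0]) auto
  qed
qed

lemma line_fabc_touch_slope:
  assumes a: "0 < a" and s: "s < 0"
    and touch: "curve_line s t \<inter> curve_fabc f1 f2 a b c = {(Fin u, Fin v)}"
  shows "s = a * profile_deriv f1 f2 (u + b)"
proof (rule ccontr)
  assume ne: "s \<noteq> a * profile_deriv f1 f2 (u + b)"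
  define h where "h x = s * x + t - fabc f1 f2 a b c x" for x
  have "(Fin u, Fin v) \<in> curve_line s t" "(Fin u, Fin v) \<in> curve_fabc f1 f2 a b c"
    using touch by blast+
  then have u: "u \<noteq> - b" "h u = 0"
    by (simp_all add: h_def)
  have der: "(h has_real_derivative s - a * profile_deriv f1 f2 (u + b)) (at u)"
    unfolding h_def using fabc_has_deriv[OF u(1)] by (auto intro!: derivative_eq_intros)
  obtain a0 b0 where ab: "a0 < u" "u < b0" "\<And>x. a0 \<le> x \<Longrightarrow> x \<le> b0 \<Longrightarrow> x \<noteq> - b"
    and sign: "0 < h a0 * h b0"
    using line_fabc_same_sign_around[OF a s u(1)] unfolding h_def by blast
  obtain z where z: "a0 < z" "z < b0" "z \<noteq> u" "h z = 0"
  proof (rule transversal_zero_not_unique[OF ab(1,2) _ u(2) der _ sign])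
    show "isCont h x" if "a0 \<le> x" "x \<le> b0" for x
      unfolding h_def using ab(3)[OF that] by (intro continuous_intros fabc_isCont) auto
    show "s - a * profile_deriv f1 f2 (u + b) \<noteq> 0"
      using ne by simp
  qed
  have "z \<noteq> - b"
    using ab(3)[of z] z by simp
  with z(4) have "(Fin z, Fin (s * z + t)) \<in> curve_line s t \<inter> curve_fabc f1 f2 a b c"
    by (simp add: h_def)
  then have "(Fin z, Fin (s * z + t)) \<in> {(Fin u, Fin v)}"
    by (simp only: touch)
  with z(3) show False
    by simp
qed

lemma fabc_meet_left_of_poles:
  assumes a: "0 < a" and bb: "b' < b" and cc: "c' < c"
  obtains z where "z < - b" "fabc f1 f2 a b c z = fabc f1 f2 a' b' c' z"
proof -
  let ?g = "fabc f1 f2 a b c" and ?g' = "fabc f1 f2 a' b' c'"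
  have "eventually (\<lambda>x. ?g x < ?g' x) (at_left (- b))"
    using filterlim_at_bot_tendsto_imp_eventually_less[OF fabc_at_left_pole[OF a] fabc_tendsto_within] bb
    by simp
  then obtain x2 where x2: "- b - 1 < x2" "x2 < - b" "?g x2 < ?g' x2"
    by (rule eventually_at_left_obtain[where l = "- b - 1"]) simp_all
  have "eventually (\<lambda>x. ?g' x < ?g x) at_bot"
    using tendsto_imp_eventually_less[OF fabc_tendsto_at_bot fabc_tendsto_at_bot cc] .
  then obtain x1 where x1: "x1 < x2" "?g' x1 < ?g x1"
    by (rule eventually_at_bot_obtain)
  have "\<exists>z. x1 \<le> z \<and> z \<le> x2 \<and> ?g z - ?g' z = 0"
    using x1 x2 bb by (intro IVT2) (auto intro!: isCont_diff fabc_isCont)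
  then obtain z where "z \<le> x2" "?g z = ?g' z"
    by auto
  with x2 show thesis
    by (intro that[of z]) auto
qed

lemma fabc_meet_right_of_poles:
  assumes a': "0 < a'" and bb: "b' < b" and cc: "c' < c"
  obtains z where "- b' < z" "fabc f1 f2 a b c z = fabc f1 f2 a' b' c' z"
proof -
  let ?g = "fabc f1 f2 a b c" and ?g' = "fabc f1 f2 a' b' c'"
  have "eventually (\<lambda>x. ?g x < ?g' x) (at_right (- b'))"
    using tendsto_filterlim_at_top_imp_eventually_less[OF fabc_tendsto_within fabc_at_right_pole[OF a']] bb
    by simp
  then obtain x1 where x1: "- b' < x1" "x1 < - b' + 1" "?g x1 < ?g' x1"
    by (rule eventually_at_right_obtain[where r = "- b' + 1"]) simp_all
  have "eventually (\<lambda>x. ?g' x < ?g x) at_top"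
    using tendsto_imp_eventually_less[OF fabc_tendsto_at_top fabc_tendsto_at_top cc] .
  then obtain x2 where x2: "x1 < x2" "?g' x2 < ?g x2"
    by (rule eventually_at_top_obtain)
  have "\<exists>z. x1 \<le> z \<and> z \<le> x2 \<and> ?g z - ?g' z = 0"
    using x1 x2 bb by (intro IVT) (auto intro!: isCont_diff fabc_isCont)
  then obtain z where "x1 \<le> z" "?g z = ?g' z"
    by auto
  with x1 show thesis
    by (intro that[of z]) auto
qed

text \<open>If \<open>c' < c\<close>, the two curves would meet on both sides of their poles.\<close>

lemma fabc_touch_const_less:
  assumes a: "0 < a" "0 < a'" and bb: "b' < b"
    and touch: "curve_fabc f1 f2 a b c \<inter> curve_fabc f1 f2 a' b' c' = {(Fin u, Fin v)}"
  shows "c < c'"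
proof (rule ccontr)
  assume "\<not> c < c'"
  moreover have "c \<noteq> c'"
  proof
    assume "c = c'"
    then have "(Infty, Fin c) \<in> curve_fabc f1 f2 a b c \<inter> curve_fabc f1 f2 a' b' c'"
      by simp
    then show False
      by (simp only: touch) simp
  qed
  ultimately have cc: "c' < c"
    by simp
  obtain z1 where z1: "z1 < - b" "fabc f1 f2 a b c z1 = fabc f1 f2 a' b' c' z1"
    using fabc_meet_left_of_poles[OF a(1) bb cc] .
  obtain z2 where z2: "- b' < z2" "fabc f1 f2 a b c z2 = fabc f1 f2 a' b' c' z2"
    using fabc_meet_right_of_poles[OF a(2) bb cc] .
  have "z1 = u" "z2 = u"
    using fabc_touch_zero_unique[OF touch] z1 z2 bb by auto
  then show False
    using z1 z2 bb by simp
qed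

lemma fabc_same_sign_around:
  assumes a: "0 < a" "0 < a'" and bb: "b' < b" and cc: "c < c'" and u: "u \<noteq> - b" "u \<noteq> - b'"
  obtains a0 b0 where "a0 < u" "u < b0" "\<And>x. a0 \<le> x \<Longrightarrow> x \<le> b0 \<Longrightarrow> x \<noteq> - b \<and> x \<noteq> - b'"
    "0 < (fabc f1 f2 a b c a0 - fabc f1 f2 a' b' c' a0) * (fabc f1 f2 a b c b0 - fabc f1 f2 a' b' c' b0)"
proof -
  let ?g = "fabc f1 f2 a b c" and ?g' = "fabc f1 f2 a' b' c'"
  consider "u < - b" | "- b < u" "u < - b'" | "- b' < u"
    using u by linarith
  then show thesis
  proof cases
    case 1
    have "eventually (\<lambda>x. ?g x < ?g' x) at_bot"
      using tendsto_imp_eventually_less[OF fabc_tendsto_at_bot fabc_tendsto_at_bot cc] .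
    then obtain a0 where a0: "a0 < u" "?g a0 < ?g' a0"
      by (rule eventually_at_bot_obtain)
    have "eventually (\<lambda>x. ?g x < ?g' x) (at_left (- b))"
      using filterlim_at_bot_tendsto_imp_eventually_less[OF fabc_at_left_pole[OF a(1)] fabc_tendsto_within] bb
      by simp
    then obtain b0 where b0: "u < b0" "b0 < - b" "?g b0 < ?g' b0"
      using 1 by (rule eventually_at_left_obtain)
    show thesis
      using a0 b0 bb by (intro that[of a0 b0]) (auto simp: mult_neg_neg)
  next
    case 2
    have "eventually (\<lambda>x. ?g' x < ?g x) (at_right (- b))"
      using tendsto_filterlim_at_top_imp_eventually_less[OF fabc_tendsto_within fabc_at_right_pole[OF a(1)]] bb
      by simp
    then obtain a0 where a0: "- b < a0" "a0 < u" "?g' a0 < ?g a0"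
      using 2(1) by (rule eventually_at_right_obtain)
    have "eventually (\<lambda>x. ?g' x < ?g x) (at_left (- b'))"
      using filterlim_at_bot_tendsto_imp_eventually_less[OF fabc_at_left_pole[OF a(2)] fabc_tendsto_within] bb
      by simp
    then obtain b0 where b0: "u < b0" "b0 < - b'" "?g' b0 < ?g b0"
      using 2(2) by (rule eventually_at_left_obtain)
    show thesis
      using a0 b0 by (intro that[of a0 b0]) auto
  next
    case 3
    have "eventually (\<lambda>x. ?g x < ?g' x) (at_right (- b'))"
      using tendsto_filterlim_at_top_imp_eventually_less[OF fabc_tendsto_within fabc_at_right_pole[OF a(2)]] bb
      by simp
    then obtain a0 where a0: "- b' < a0" "a0 < u" "?g a0 < ?g' a0"
      using 3 by (rule eventually_at_right_obtain)
    have "eventually (\<lambda>x. ?g x < ?g' x) at_top"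
      using tendsto_imp_eventually_less[OF fabc_tendsto_at_top fabc_tendsto_at_top cc] .
    then obtain b0 where b0: "u < b0" "?g b0 < ?g' b0"
      by (rule eventually_at_top_obtain)
    show thesis
      using a0 b0 bb by (intro that[of a0 b0]) (auto simp: mult_neg_neg)
  qed
qed

lemma fabc_touch_slope_ordered:
  assumes a: "0 < a" "0 < a'" and bb: "b' < b"
    and touch: "curve_fabc f1 f2 a b c \<inter> curve_fabc f1 f2 a' b' c' = {(Fin u, Fin v)}"
  shows "a * profile_deriv f1 f2 (u + b) = a' * profile_deriv f1 f2 (u + b')"
proof (rule ccontr)
  assume ne: "a * profile_deriv f1 f2 (u + b) \<noteq> a' * profile_deriv f1 f2 (u + b')"
  define h where "h x = fabc f1 f2 a b c x - fabc f1 f2 a' b' c' x" for x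
  have "(Fin u, Fin v) \<in> curve_fabc f1 f2 a b c" "(Fin u, Fin v) \<in> curve_fabc f1 f2 a' b' c'"
    using touch by blast+
  then have u: "u \<noteq> - b" "u \<noteq> - b'" "h u = 0"
    by (simp_all add: h_def)
  have der: "(h has_real_derivative a * profile_deriv f1 f2 (u + b) - a' * profile_deriv f1 f2 (u + b')) (at u)"
    unfolding h_def using fabc_has_deriv[OF u(1)] fabc_has_deriv[OF u(2)]
    by (auto intro!: derivative_eq_intros)
  obtain a0 b0 where ab: "a0 < u" "u < b0" "\<And>x. a0 \<le> x \<Longrightarrow> x \<le> b0 \<Longrightarrow> x \<noteq> - b \<and> x \<noteq> - b'"
    and sign: "0 < h a0 * h b0"
    using fabc_same_sign_around[OF a bb fabc_touch_const_less[OF a bb touch] u(1,2)]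
    unfolding h_def by blast
  obtain z where z: "a0 < z" "z < b0" "z \<noteq> u" "h z = 0"
  proof (rule transversal_zero_not_unique[OF ab(1,2) _ u(3) der _ sign])
    show "isCont h x" if "a0 \<le> x" "x \<le> b0" for x
      unfolding h_def using ab(3)[OF that] by (intro continuous_intros fabc_isCont) auto
    show "a * profile_deriv f1 f2 (u + b) - a' * profile_deriv f1 f2 (u + b') \<noteq> 0"
      using ne by simp
  qed
  then show False
    using fabc_touch_zero_unique[OF touch, of z] ab(3)[of z] by (simp add: h_def)
qed

lemma fabc_touch_slope:
  assumes a: "0 < a" "0 < a'"
    and touch: "curve_fabc f1 f2 a b c \<inter> curve_fabc f1 f2 a' b' c' = {(Fin u, Fin v)}"
  shows "a * profile_deriv f1 f2 (u + b) = a' * profile_deriv f1 f2 (u + b')"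
proof -
  have "b \<noteq> b'"
  proof
    assume "b = b'"
    then have "(Fin (- b), Infty) \<in> curve_fabc f1 f2 a b c \<inter> curve_fabc f1 f2 a' b' c'"
      by simp
    then show False
      by (simp only: touch) simp
  qed
  then consider "b' < b" | "b < b'"
    by linarith
  then show ?thesis
  proof cases
    case 1
    show ?thesis
      by (rule fabc_touch_slope_ordered[OF a 1 touch])
  next
    case 2
    then show ?thesis
      using fabc_touch_slope_ordered[OF a(2,1) 2] touch by (simp add: Int_commute)
  qed
qed

lemma touching_has_slope_at:
  assumes D: "D \<in> Cminus f1 f2" and touch: "C \<inter> D = {(Fin u, Fin v)}"
    and C: "has_slope_at f1 f2 C u m"
  shows "has_slope_at f1 f2 D u m"
  using C[unfolded has_slope_at_def]
proof (elim disjE exE conjE)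
  fix s t assume s: "s < 0" and C_def: "C = curve_line s t" and "m = s"
  from D show ?thesis
  proof (cases rule: Cminus_cases)
    case (1 a b c)
    then have "s = a * profile_deriv f1 f2 (u + b)"
      using line_fabc_touch_slope[OF 1(1) s] touch C_def by simp
    then show ?thesis
      using 1 \<open>m = s\<close> by (auto simp: has_slope_at_def)
  next
    case (2 s' t')
    then have "(Infty, Infty) \<in> C \<inter> D"
      using C_def by simp
    then show ?thesis
      by (simp only: touch) simp
  qed
next
  fix a b c assume a: "0 < a" and C_def: "C = curve_fabc f1 f2 a b c"
    and m: "m = a * profile_deriv f1 f2 (u + b)"
  from D show ?thesis
  proof (cases rule: Cminus_cases)
    case (1 a' b' c')
    then have "m = a' * profile_deriv f1 f2 (u + b')"
      using fabc_touch_slope[OF a 1(1)] touch C_def m by simp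
    then show ?thesis
      using 1 by (auto simp: has_slope_at_def)
  next
    case (2 s t)
    then have "m = s"
      using line_fabc_touch_slope[OF a 2(1)] touch C_def m by (simp add: Int_commute)
    then show ?thesis
      using 2 by (auto simp: has_slope_at_def)
  qed
qed

section \<open>Uniqueness of the touching curve\<close>

lemma fabc_increment:
  assumes "u \<noteq> - b"
  shows "fabc f1 f2 a b c w - fabc f1 f2 a b c u
    = a * profile_deriv f1 f2 (u + b) * normalized_increment f1 f2 (w - u) (u + b)"
proof -
  have "profile_deriv f1 f2 (u + b) \<noteq> 0"
    using profile_deriv_neg[of "u + b"] assms by simp
  then show ?thesis
    by (simp add: fabc_eq_profile normalized_increment_def field_simps)
qed

lemma tangent_line_meets_fabc_parallel:
  assumes a: "0 < a" and slope: "s = a * profile_deriv f1 f2 (u + b)"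
    and p: "(Fin u, Fin v) \<in> curve_line s t" "(Fin u, Fin v) \<in> curve_fabc f1 f2 a b c"
    and q: "q \<in> curve_line s t" "q \<in> curve_fabc f1 f2 a b c"
  shows "parallel q (Fin u, Fin v)"
proof (cases q rule: point_cases)
  case (1 w y)
  show ?thesis
  proof (rule ccontr)
    assume "\<not> parallel q (Fin u, Fin v)"
    then have "w \<noteq> u"
      using 1 by (simp add: parallel_def)
    have ub: "u + b \<noteq> 0" "u + b + (w - u) \<noteq> 0"
      using p q 1 by auto
    have "s * (w - u) = fabc f1 f2 a b c w - fabc f1 f2 a b c u"
      using p q 1 by (simp add: algebra_simps)
    also have "\<dots> = s * normalized_increment f1 f2 (w - u) (u + b)"
      using fabc_increment[of u b] ub slope by simp
    finally have "normalized_increment f1 f2 (w - u) (u + b) = w - u"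
      using a profile_deriv_neg[OF ub(1)] slope by (simp add: mult_neg_pos)
    then show False
      using normalized_increment_ne[of "w - u" "u + b"] \<open>w \<noteq> u\<close> ub by simp
  qed
qed (use q in auto)

lemma tangent_fabcs_same_pole:
  assumes a: "0 < a1" "0 < a2"
    and slope: "a1 * profile_deriv f1 f2 (u + b1) = a2 * profile_deriv f1 f2 (u + b2)"
    and p: "(Fin u, Fin v) \<in> curve_fabc f1 f2 a1 b1 c1" "(Fin u, Fin v) \<in> curve_fabc f1 f2 a2 b2 c2"
    and q: "q \<in> curve_fabc f1 f2 a1 b1 c1" "q \<in> curve_fabc f1 f2 a2 b2 c2"
    and np: "\<not> parallel q (Fin u, Fin v)"
  shows "b1 = b2"
proof -
  define m where "m = a1 * profile_deriv f1 f2 (u + b1)"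
  have ub: "u + b1 \<noteq> 0" "u + b2 \<noteq> 0"
    using p by auto
  have F': "profile_deriv f1 f2 (u + b1) < 0" "profile_deriv f1 f2 (u + b2) < 0"
    using profile_deriv_neg ub by auto
  have m: "m < 0" "m = a2 * profile_deriv f1 f2 (u + b2)"
    using a F' slope by (simp_all add: m_def mult_pos_neg)
  show ?thesis
  proof (cases q rule: point_cases)
    case (1 w y)
    have "w \<noteq> u"
      using np 1 by (simp add: parallel_def)
    have wb: "u + b1 + (w - u) \<noteq> 0" "u + b2 + (w - u) \<noteq> 0"
      using q 1 by auto
    have "m * normalized_increment f1 f2 (w - u) (u + b1) = y - v"
      using fabc_increment[of u b1 a1 c1 w] p(1) q(1) 1 by (simp add: m_def)
    also have "\<dots> = m * normalized_increment f1 f2 (w - u) (u + b2)"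
      using fabc_increment[of u b2 a2 c2 w] p(2) q(2) 1 by (simp add: m(2))
    finally have "normalized_increment f1 f2 (w - u) (u + b1) = normalized_increment f1 f2 (w - u) (u + b2)"
      using m(1) by simp
    then show ?thesis
      using normalized_increment_inj[of "w - u"] \<open>w \<noteq> u\<close> ub wb
      by (auto dest: inj_onD)
  next
    case (3 y)
    have "m * (profile f1 f2 (u + b1) / profile_deriv f1 f2 (u + b1)) = v - y"
      using p(1) q(1) 3 F' by (simp add: m_def fabc_eq_profile)
    also have "\<dots> = m * (profile f1 f2 (u + b2) / profile_deriv f1 f2 (u + b2))"
      using p(2) q(2) 3 F' by (simp add: m(2) fabc_eq_profile)
    finally have "profile f1 f2 (u + b1) / profile_deriv f1 f2 (u + b1)
        = profile f1 f2 (u + b2) / profile_deriv f1 f2 (u + b2)"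
      using m(1) by (simp only: mult_cancel_left) simp
    then show ?thesis
      using profile_over_deriv_inj[OF ub] by simp
  qed (use q in auto)
qed

lemma tangent_fabcs_eq:
  assumes "0 < a1" "0 < a2"
    and slope: "a1 * profile_deriv f1 f2 (u + b1) = a2 * profile_deriv f1 f2 (u + b2)"
    and p: "(Fin u, Fin v) \<in> curve_fabc f1 f2 a1 b1 c1" "(Fin u, Fin v) \<in> curve_fabc f1 f2 a2 b2 c2"
    and "q \<in> curve_fabc f1 f2 a1 b1 c1" "q \<in> curve_fabc f1 f2 a2 b2 c2"
    and "\<not> parallel q (Fin u, Fin v)"
  shows "curve_fabc f1 f2 a1 b1 c1 = curve_fabc f1 f2 a2 b2 c2"
proof -
  have b: "b1 = b2"
    by (rule tangent_fabcs_same_pole) fact+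
  moreover have "profile_deriv f1 f2 (u + b1) \<noteq> 0"
    using profile_deriv_neg[of "u + b1"] p(1) by auto
  ultimately have "a1 = a2"
    using slope by simp
  moreover have "c1 = c2"
    using p b \<open>a1 = a2\<close> by (simp add: fabc_eq_profile)
  ultimately show ?thesis
    using b by simp
qed

lemma has_slope_at_curve_unique:
  assumes D1: "has_slope_at f1 f2 D1 u m" and D2: "has_slope_at f1 f2 D2 u m"
    and p: "(Fin u, Fin v) \<in> D1" "(Fin u, Fin v) \<in> D2"
    and q: "q \<in> D1" "q \<in> D2" and np: "\<not> parallel q (Fin u, Fin v)"
  shows "D1 = D2"
proof -
  have line_fabc: False
    if "s < 0" "L = curve_line s t" "m = s" "0 < a" "E = curve_fabc f1 f2 a b c"
      "m = a * profile_deriv f1 f2 (u + b)" "(Fin u, Fin v) \<in> L" "(Fin u, Fin v) \<in> E" "q \<in> L" "q \<in> E"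
    for L E s t a b c
  proof -
    have "parallel q (Fin u, Fin v)"
      using that by (intro tangent_line_meets_fabc_parallel[OF that(4), where s = s and t = t and b = b and c = c]) simp_all
    with np show False
      by simp
  qed
  from D1[unfolded has_slope_at_def] D2[unfolded has_slope_at_def] show ?thesis
  proof (elim disjE exE conjE)
    fix s1 t1 s2 t2
    assume "D1 = curve_line s1 t1" "m = s1" "D2 = curve_line s2 t2" "m = s2"
    then show ?thesis
      using p by simp
  next
    fix s t a b c
    assume "s < 0" "D1 = curve_line s t" "m = s" "0 < a" "D2 = curve_fabc f1 f2 a b c"
      "m = a * profile_deriv f1 f2 (u + b)"
    then show ?thesis
      using line_fabc p q by blast
  next
    fix s t a b c
    assume "0 < a" "D1 = curve_fabc f1 f2 a b c" "m = a * profile_deriv f1 f2 (u + b)"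
      "s < 0" "D2 = curve_line s t" "m = s"
    then show ?thesis
      using line_fabc p q by blast
  next
    fix a1 b1 c1 a2 b2 c2
    assume "0 < a1" "D1 = curve_fabc f1 f2 a1 b1 c1" "m = a1 * profile_deriv f1 f2 (u + b1)"
      "0 < a2" "D2 = curve_fabc f1 f2 a2 b2 c2" "m = a2 * profile_deriv f1 f2 (u + b2)"
    then show ?thesis
      using tangent_fabcs_eq[of a1 a2 u b1 b2 v c1 c2 q] p q np by simp
  qed
qed

lemma fabc_meet_same_pole:
  assumes "a \<noteq> a'" "c \<noteq> c'"
  obtains x where "x \<noteq> - b" "fabc f1 f2 a b c x = fabc f1 f2 a' b c' x"
proof -
  define w where "w = (c' - c) / (a - a')"
  have aw: "(a - a') * w = c' - c" and "w \<noteq> 0"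
    using assms by (simp_all add: w_def)
  show thesis
  proof (cases "0 < w")
    case True
    obtain t where t: "0 < t" "f1 t = w"
      using strongly_hyperbolic_surj[OF sh1 True] .
    then have "fabc f1 f2 a b c (t - b) = fabc f1 f2 a' b c' (t - b)"
      using aw by (simp add: fabc_def algebra_simps)
    then show thesis
      using that[of "t - b"] t by simp
  next
    case False
    then have "0 < - w"
      using \<open>w \<noteq> 0\<close> by simp
    obtain t where t: "0 < t" "f2 t = - w"
      using strongly_hyperbolic_surj[OF sh2 \<open>0 < - w\<close>] .
    then have "fabc f1 f2 a b c (- t - b) = fabc f1 f2 a' b c' (- t - b)"
      using aw by (simp add: fabc_def algebra_simps)
    then show thesis
      using that[of "- t - b"] t by simp
  qed
qed

lemma fabc_touch_at_pole_same_scale: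
  assumes touch: "curve_fabc f1 f2 a b c \<inter> curve_fabc f1 f2 a' b c' = {(Fin (- b), Infty)}"
  shows "a = a'"
proof (rule ccontr)
  assume "a \<noteq> a'"
  moreover have "c \<noteq> c'"
  proof
    assume "c = c'"
    then have "(Infty, Fin c) \<in> curve_fabc f1 f2 a b c \<inter> curve_fabc f1 f2 a' b c'"
      by simp
    then show False
      by (simp only: touch) simp
  qed
  ultimately obtain x where "x \<noteq> - b" "fabc f1 f2 a b c x = fabc f1 f2 a' b c' x"
    by (rule fabc_meet_same_pole)
  then have "(Fin x, Fin (fabc f1 f2 a b c x)) \<in> curve_fabc f1 f2 a b c \<inter> curve_fabc f1 f2 a' b c'"
    by simp
  then show False
    by (simp only: touch) simp
qed

lemma fabc_meet_same_asymptote: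
  assumes "0 < a" "a < a'" "b \<noteq> b'"
  obtains x where "x \<noteq> - b" "x \<noteq> - b'" "fabc f1 f2 a b v x = fabc f1 f2 a' b' v x"
proof (cases "b < b'")
  case True
  obtain y where y: "0 < y" "a * f1 y = a' * f1 (y + (b' - b))"
    using strongly_hyperbolic_scaled_shift_eq[OF sh1 assms(1,2), of "b' - b"] True by auto
  have shift: "y - b + b' = y + (b' - b)"
    by simp
  have "fabc f1 f2 a b v (y - b) = fabc f1 f2 a' b' v (y - b)"
    using y True unfolding fabc_def shift by simp
  then show ?thesis
    using that[of "y - b"] y True by simp
next
  case False
  then have "b' < b"
    using assms(3) by simp
  obtain y where y: "0 < y" "a * f2 y = a' * f2 (y + (b - b'))"
    using strongly_hyperbolic_scaled_shift_eq[OF sh2 assms(1,2), of "b - b'"] \<open>b' < b\<close> by auto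
  have shift: "- (- b - y) - b' = y + (b - b')"
    by simp
  have "fabc f1 f2 a b v (- b - y) = fabc f1 f2 a' b' v (- b - y)"
    using y \<open>b' < b\<close> unfolding fabc_def shift by simp
  then show ?thesis
    using that[of "- b - y"] y \<open>b' < b\<close> by simp
qed

lemma fabc_touch_at_asymptote_same_scale:
  assumes "0 < a" "0 < a'"
    and touch: "curve_fabc f1 f2 a b v \<inter> curve_fabc f1 f2 a' b' v = {(Infty, Fin v)}"
  shows "a = a'"
proof (rule ccontr)
  assume ne: "a \<noteq> a'"
  have "b \<noteq> b'"
  proof
    assume "b = b'"
    then have "(Fin (- b), Infty) \<in> curve_fabc f1 f2 a b v \<inter> curve_fabc f1 f2 a' b' v"
      by simp
    then show False
      by (simp only: touch) simp
  qed
  obtain x where "x \<noteq> - b" "x \<noteq> - b'" "fabc f1 f2 a b v x = fabc f1 f2 a' b' v x"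
  proof (cases "a < a'")
    case True
    show ?thesis
      by (rule fabc_meet_same_asymptote[OF assms(1) True \<open>b \<noteq> b'\<close>]) (rule that)
  next
    case False
    then have "a' < a"
      using ne by simp
    moreover have "b' \<noteq> b"
      using \<open>b \<noteq> b'\<close> by simp
    ultimately obtain x where "x \<noteq> - b'" "x \<noteq> - b" "fabc f1 f2 a' b' v x = fabc f1 f2 a b v x"
      using fabc_meet_same_asymptote[OF assms(2)] by blast
    then show ?thesis
      by (intro that[of x]) simp_all
  qed
  then have "(Fin x, Fin (fabc f1 f2 a b v x)) \<in> curve_fabc f1 f2 a b v \<inter> curve_fabc f1 f2 a' b' v"
    by simp
  then show False
    by (simp only: touch) simp
qed

lemma touching_curve_unique_Fin_Fin:
  assumes C: "C \<in> Cminus f1 f2" and D: "D1 \<in> Cminus f1 f2" "D2 \<in> Cminus f1 f2"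
    and touch: "C \<inter> D1 = {(Fin u, Fin v)}" "C \<inter> D2 = {(Fin u, Fin v)}"
    and q: "q \<in> D1" "q \<in> D2" and np: "\<not> parallel q (Fin u, Fin v)"
  shows "D1 = D2"
proof -
  obtain m where "has_slope_at f1 f2 C u m"
    using Cminus_has_slope_at[OF C] .
  then have "has_slope_at f1 f2 D1 u m" "has_slope_at f1 f2 D2 u m"
    using touching_has_slope_at D touch by blast+
  moreover have "(Fin u, Fin v) \<in> D1" "(Fin u, Fin v) \<in> D2"
    using touch by blast+
  ultimately show ?thesis
    using has_slope_at_curve_unique q np by blast
qed

lemma touching_curve_unique_Infty_Infty:
  assumes C: "C \<in> Cminus f1 f2" and D: "D1 \<in> Cminus f1 f2" "D2 \<in> Cminus f1 f2"
    and touch: "C \<inter> D1 = {(Infty, Infty)}" "C \<inter> D2 = {(Infty, Infty)}"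
    and q: "q \<in> D1" "q \<in> D2" and np: "\<not> parallel q (Infty, Infty)"
  shows "D1 = D2"
proof -
  have "(Infty, Infty) \<in> C" "(Infty, Infty) \<in> D1" "(Infty, Infty) \<in> D2"
    using touch by blast+
  then obtain s t s1 t1 s2 t2 where
    lines: "C = curve_line s t" "D1 = curve_line s1 t1" "D2 = curve_line s2 t2"
    using C D by (metis Cminus_through_Infty_Infty)
  then have "s1 = s" "s2 = s"
    using line_touch_at_infinity_same_slope touch by metis+
  moreover obtain x y where "q = (Fin x, Fin y)"
    using np by (cases q rule: point_cases) (auto simp: parallel_def)
  ultimately show ?thesis
    using q lines by simp
qed

lemma touching_curve_unique_Infty_Fin:
  assumes C: "C \<in> Cminus f1 f2" and D: "D1 \<in> Cminus f1 f2" "D2 \<in> Cminus f1 f2"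
    and touch: "C \<inter> D1 = {(Infty, Fin v)}" "C \<inter> D2 = {(Infty, Fin v)}"
    and q: "q \<in> D1" "q \<in> D2" and np: "\<not> parallel q (Infty, Fin v)"
  shows "D1 = D2"
proof -
  have "(Infty, Fin v) \<in> C" "(Infty, Fin v) \<in> D1" "(Infty, Fin v) \<in> D2"
    using touch by blast+
  then obtain a b a1 b1 a2 b2 where a: "0 < a" "0 < a1" "0 < a2" and
    curves: "C = curve_fabc f1 f2 a b v" "D1 = curve_fabc f1 f2 a1 b1 v" "D2 = curve_fabc f1 f2 a2 b2 v"
    using C D by (metis Cminus_through_Infty_Fin)
  then have "a1 = a" "a2 = a"
    using fabc_touch_at_asymptote_same_scale touch by metis+
  moreover have "b1 = b2"
  proof (cases q rule: point_cases)
    case (1 x y)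
    then have "x + b1 \<noteq> 0" "x + b2 \<noteq> 0" "profile f1 f2 (x + b1) = profile f1 f2 (x + b2)"
      using q curves a \<open>a1 = a\<close> \<open>a2 = a\<close> by (auto simp: fabc_eq_profile)
    then have "x + b1 = x + b2"
      by (rule profile_inj)
    then show ?thesis
      by simp
  qed (use q curves np in \<open>auto simp: parallel_def\<close>)
  ultimately show ?thesis
    using curves by simp
qed

lemma touching_curve_unique_Fin_Infty:
  assumes C: "C \<in> Cminus f1 f2" and D: "D1 \<in> Cminus f1 f2" "D2 \<in> Cminus f1 f2"
    and touch: "C \<inter> D1 = {(Fin u, Infty)}" "C \<inter> D2 = {(Fin u, Infty)}"
    and q: "q \<in> D1" "q \<in> D2" and np: "\<not> parallel q (Fin u, Infty)"
  shows "D1 = D2"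
proof -
  have "(Fin u, Infty) \<in> C" "(Fin u, Infty) \<in> D1" "(Fin u, Infty) \<in> D2"
    using touch by blast+
  then obtain a c a1 c1 a2 c2 where a: "0 < a" "0 < a1" "0 < a2" and
    curves: "C = curve_fabc f1 f2 a (- u) c" "D1 = curve_fabc f1 f2 a1 (- u) c1"
      "D2 = curve_fabc f1 f2 a2 (- u) c2"
    using C D by (metis Cminus_through_Fin_Infty)
  then have "a1 = a" "a2 = a"
    using fabc_touch_at_pole_same_scale[where b = "- u"] touch by (metis minus_minus)+
  moreover have "c1 = c2"
    using q curves np \<open>a1 = a\<close> \<open>a2 = a\<close>
    by (cases q rule: point_cases) (auto simp: parallel_def fabc_eq_profile)
  ultimately show ?thesis
    using curves by simp
qed

end

theorem theorem4p14:
  fixes f1 f2 :: "real \<Rightarrow> real" and C :: "point set" and p q :: point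
  assumes "strongly_hyperbolic f1" and "strongly_hyperbolic f2"
    and "C \<in> Cminus f1 f2" and "p \<in> C" and "q \<notin> C" and "\<not> parallel q p"
  shows "\<forall>D1 \<in> Cminus f1 f2. \<forall>D2 \<in> Cminus f1 f2.
           p \<in> D1 \<and> q \<in> D1 \<and> C \<inter> D1 = {p} \<and>
           p \<in> D2 \<and> q \<in> D2 \<and> C \<inter> D2 = {p} \<longrightarrow> D1 = D2"
proof (intro ballI impI)
  interpret strongly_hyperbolic_pair f1 f2
    using assms(1,2) by unfold_locales
  fix D1 D2
  assume D: "D1 \<in> Cminus f1 f2" "D2 \<in> Cminus f1 f2"
    and "p \<in> D1 \<and> q \<in> D1 \<and> C \<inter> D1 = {p} \<and> p \<in> D2 \<and> q \<in> D2 \<and> C \<inter> D2 = {p}"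
  then have touch: "C \<inter> D1 = {p}" "C \<inter> D2 = {p}" and q: "q \<in> D1" "q \<in> D2"
    by auto
  note unique = touching_curve_unique_Fin_Fin touching_curve_unique_Fin_Infty
    touching_curve_unique_Infty_Fin touching_curve_unique_Infty_Infty
  show "D1 = D2"
    by (cases p rule: point_cases) (use unique[OF assms(3) D _ _ q] touch assms(6) in simp_all)
qed

end
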